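(* Let $H$ be a quasi-bialgebra over a field $k$, let $A$ be a left $H$-module algebra and let $B=A^{H}$ be its subalgebra of invariants. For a left $B$-module $M$, regard $A\otimes_B M$ as a left $(H,A)$-Hopf module via $h(a\otimes_B m)=h\cdot a\otimes_B m$ and $b(a\otimes_B m)=ba\otimes_B m$ for $h\in H$ and $a,b\in A$. For a left $(H,A)$-Hopf module $N$, regard $N^{H}=\{n\in N\mid hn=\varepsilon(h)n \text{ for all } h\in H\}$ as a left $B$-module. Then the functor $A\otimes_B(-):{}_B\mathcal{M}\to{}_A({}_H\mathcal{M})$ is left adjoint to the functor $(-)^{H}:{}_A({}_H\mathcal{M})\to{}_B\mathcal{M}$. The adjunction bijection $\mathrm{Hom}_{{}_A({}_H\mathcal{M})}(A\otimes_B M,N)\cong \mathrm{Hom}_B(M,N^H)$ is given by $f\mapsto (m\mapsto f(1_A\otimes_B m))$, with inverse $g\mapsto (a\otimes_B m\mapsto a\,g(m))$.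
   Context: A quasi-bialgebra $(H,\Delta,\varepsilon,\phi)$ over a field $k$ consists of an associative unital $k$-algebra $H$, algebra morphisms $\Delta:H\to H\otimes H$ and $\varepsilon:H\to k$, and an invertible element $\phi\in H\otimes H\otimes H$ satisfying the following conditions: - $\phi(\Delta\otimes I)\Delta(h)\phi^{-1}=(I\otimes\Delta)\Delta(h)$ for all $h\in H$; - $(I\otimes\varepsilon)\Delta(h)=(\varepsilon\otimes I)\Delta(h)=h$ for all $h\in H$; - $(I\otimes I\otimes\Delta)(\phi)(\Delta\otimes I\otimes I)(\phi)=(1\otimes\phi)(I\otimes\Delta\otimes I)(\phi)(\phi\otimes 1)$; - $(I\otimes\varepsilon\otimes I)(\phi)=1\otimes 1$. Notation: $\Delta(h)=h_1\otimes h_2$ with summation suppressed, $\phi=X^1\otimes X^2\otimes X^3$, and $\phi^{-1}=x^1\otimes x^2\otimes x^3$. A left $H$-module algebra is a left $H$-module $A$ (action $h\cdot a$) with a bilinear multiplication, which need not be associative, and a unit $1_A$, such that for all $a,b,c\in A$ and $h\in H$: - $(ab)c=(X^1\cdot a)[(X^2\cdot b)(X^3\cdot c)]$; - $h\cdot(ab)=(h_1\cdot a)(h_2\cdot b)$; - $h\cdot 1_A=\varepsilon(h)1_A$. The subalgebra of invariants is $B=A^H=\{a\in A\mid h\cdot a=\varepsilon(h)a\ \forall h\in H\}$. It is an associative algebra, and $A$ is a $B$-bimodule by multiplication. A left $(H,A)$-Hopf module is a left $H$-module $M$ together with a map $A\otimes M\to M$, $a\otimes m\mapsto am$, such that for all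 $h\in H$, $a,b\in A$, $m\in M$: - $(ab)m=(X^1\cdot a)[(X^2\cdot b)(X^3m)]$; - $h(am)=(h_1\cdot a)(h_2m)$; - $1_Am=m$. The category ${}_A({}_H\mathcal{M})$ has these objects, with morphisms the $H$-linear maps preserving the $A$-action. *)

theory Defs
  imports Main "HOL-Library.FuncSet"
begin

text \<open>A formal sum (element of the free abelian group on a set of generators of type 'x)
 is represented by a list of generators; an element of the free abelian group is a finitely
 supported function 'x => int.  A tensor product is the quotient of the free abelian group
 by the subgroup generated by a set of relations.\<close>

definition delta :: "'x \<Rightarrow> 'x \<Rightarrow> int" where
  "delta x = (\<lambda>y. if y = x then 1 else 0)"

inductive_set subgrp_gen :: "('x \<Rightarrow> int) set \<Rightarrow> ('x \<Rightarrow> int) set" for G where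
  sg_zero: "(\<lambda>_. 0) \<in> subgrp_gen G"
| sg_gen: "g \<in> G \<Longrightarrow> g \<in> subgrp_gen G"
| sg_diff: "f \<in> subgrp_gen G \<Longrightarrow> g \<in> subgrp_gen G \<Longrightarrow> (\<lambda>x. f x - g x) \<in> subgrp_gen G"

definition fsum :: "'x list \<Rightarrow> 'x \<Rightarrow> int" where
  "fsum xs = (\<lambda>y. int (count_list xs y))"

definition teq :: "('x \<Rightarrow> int) set \<Rightarrow> 'x list \<Rightarrow> 'x list \<Rightarrow> bool" where
  "teq G xs ys \<longleftrightarrow> (\<lambda>y. fsum xs y - fsum ys y) \<in> subgrp_gen G"

text \<open>Relations defining the n-fold tensor power of H over k (simple tensors = words of length n):
 additivity in each slot, and k-scalars may be moved between slots.\<close>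
definition ktens_rel :: "('k \<Rightarrow> 'h::ab_group_add \<Rightarrow> 'h) \<Rightarrow> nat \<Rightarrow> ('h list \<Rightarrow> int) set" where
  "ktens_rel sc n =
     {(\<lambda>y. delta (w[i := a + b]) y - delta (w[i := a]) y - delta (w[i := b]) y) | w i a b.
          length w = n \<and> i < n}
   \<union> {(\<lambda>y. delta (w[i := sc c (w ! i)]) y - delta (w[j := sc c (w ! j)]) y) | w i j c.
          length w = n \<and> i < n \<and> j < n}"

definition kteq :: "('k \<Rightarrow> 'h::ab_group_add \<Rightarrow> 'h) \<Rightarrow> nat \<Rightarrow> 'h list list \<Rightarrow> 'h list list \<Rightarrow> bool" where
  "kteq sc n xs ys \<longleftrightarrow> teq (ktens_rel sc n) xs ys"

text \<open>Componentwise product in the algebra H\<otimes>...\<otimes>H, on formal sums.\<close>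
definition tmul :: "'h::times list list \<Rightarrow> 'h list list \<Rightarrow> 'h list list" where
  "tmul xs ys = concat (map (\<lambda>u. map (\<lambda>v. map2 (*) u v) ys) xs)"

text \<open>Apply a map F : H -> H\<otimes>...\<otimes>H (e.g. the comultiplication) in slot i.\<close>
definition tapply :: "nat \<Rightarrow> ('h \<Rightarrow> 'h list list) \<Rightarrow> 'h list list \<Rightarrow> 'h list list" where
  "tapply i F xs = concat (map (\<lambda>w. map (\<lambda>v. take i w @ v @ drop (Suc i) w) (F (w ! i))) xs)"

definition gsum :: "('x \<Rightarrow> 'x \<Rightarrow> 'x) \<Rightarrow> 'x \<Rightarrow> 'x list \<Rightarrow> 'x" where
  "gsum p z xs = foldr p xs z"

definition abgrp :: "'x set \<Rightarrow> ('x \<Rightarrow> 'x \<Rightarrow> 'x) \<Rightarrow> 'x \<Rightarrow> bool" where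
  "abgrp S p z \<longleftrightarrow> z \<in> S \<and> (\<forall>x\<in>S. \<forall>y\<in>S. p x y \<in> S)
     \<and> (\<forall>x\<in>S. \<forall>y\<in>S. \<forall>w\<in>S. p (p x y) w = p x (p y w))
     \<and> (\<forall>x\<in>S. \<forall>y\<in>S. p x y = p y x) \<and> (\<forall>x\<in>S. p z x = x)
     \<and> (\<forall>x\<in>S. \<exists>y\<in>S. p x y = z)"

definition kvs :: "'x set \<Rightarrow> ('x \<Rightarrow> 'x \<Rightarrow> 'x) \<Rightarrow> 'x \<Rightarrow> ('k::field \<Rightarrow> 'x \<Rightarrow> 'x) \<Rightarrow> bool" where
  "kvs S p z s \<longleftrightarrow> abgrp S p z \<and> (\<forall>c. \<forall>x\<in>S. s c x \<in> S)
     \<and> (\<forall>c. \<forall>x\<in>S. \<forall>y\<in>S. s c (p x y) = p (s c x) (s c y))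
     \<and> (\<forall>c d. \<forall>x\<in>S. s (c + d) x = p (s c x) (s d x))
     \<and> (\<forall>c d. \<forall>x\<in>S. s (c * d) x = s c (s d x))
     \<and> (\<forall>x\<in>S. s 1 x = x)"

definition k_algebra :: "('k::field \<Rightarrow> 'h::ring_1 \<Rightarrow> 'h) \<Rightarrow> bool" where
  "k_algebra sc \<longleftrightarrow> kvs UNIV (+) 0 sc
     \<and> (\<forall>c x y. sc c (x * y) = sc c x * y \<and> sc c (x * y) = x * sc c y)"

text \<open>Quasi-bialgebra (H, Delta, eps, Phi); Phinv represents the inverse of Phi.
 Delta h is a representative (formal sum of words of length 2) of the element Delta(h) of H\<otimes>H.\<close>
definition quasi_bialgebra ::
  "('k::field \<Rightarrow> 'h::ring_1 \<Rightarrow> 'h) \<Rightarrow> ('h \<Rightarrow> 'h list list) \<Rightarrow> ('h \<Rightarrow> 'k)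
    \<Rightarrow> 'h list list \<Rightarrow> 'h list list \<Rightarrow> bool" where
  "quasi_bialgebra sc Dl eps Phi Phinv \<longleftrightarrow>
     k_algebra sc
   \<and> (\<forall>h. \<forall>w\<in>set (Dl h). length w = 2)
   \<and> (\<forall>x y. kteq sc 2 (Dl (x + y)) (Dl x @ Dl y))
   \<and> (\<forall>c x. kteq sc 2 (Dl (sc c x)) (map (\<lambda>w. [sc c (w ! 0), w ! 1]) (Dl x)))
   \<and> (\<forall>x y. kteq sc 2 (Dl (x * y)) (tmul (Dl x) (Dl y)))
   \<and> kteq sc 2 (Dl 1) [[1, 1]]
   \<and> (\<forall>x y. eps (x + y) = eps x + eps y)
   \<and> (\<forall>c x. eps (sc c x) = c * eps x)
   \<and> (\<forall>x y. eps (x * y) = eps x * eps y)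
   \<and> eps 1 = 1
   \<and> (\<forall>w\<in>set Phi. length w = 3) \<and> (\<forall>w\<in>set Phinv. length w = 3)
   \<and> kteq sc 3 (tmul Phi Phinv) [[1, 1, 1]]
   \<and> kteq sc 3 (tmul Phinv Phi) [[1, 1, 1]]
   \<and> (\<forall>h. kteq sc 3 (tmul (tmul Phi (tapply 0 Dl (Dl h))) Phinv) (tapply 1 Dl (Dl h)))
   \<and> (\<forall>h. sum_list (map (\<lambda>w. sc (eps (w ! 1)) (w ! 0)) (Dl h)) = h)
   \<and> (\<forall>h. sum_list (map (\<lambda>w. sc (eps (w ! 0)) (w ! 1)) (Dl h)) = h)
   \<and> kteq sc 4 (tmul (tapply 2 Dl Phi) (tapply 0 Dl Phi))
               (tmul (tmul (map (\<lambda>w. 1 # w) Phi) (tapply 1 Dl Phi)) (map (\<lambda>w. w @ [1]) Phi))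
   \<and> kteq sc 2 (map (\<lambda>w. [sc (eps (w ! 1)) (w ! 0), w ! 2]) Phi) [[1, 1]]"

definition hmodule ::
  "('k::field \<Rightarrow> 'h::ring_1 \<Rightarrow> 'h) \<Rightarrow> 'x set \<Rightarrow> ('x \<Rightarrow> 'x \<Rightarrow> 'x) \<Rightarrow> 'x
    \<Rightarrow> ('k \<Rightarrow> 'x \<Rightarrow> 'x) \<Rightarrow> ('h \<Rightarrow> 'x \<Rightarrow> 'x) \<Rightarrow> bool" where
  "hmodule sc S p z s act \<longleftrightarrow> kvs S p z s
     \<and> (\<forall>h. \<forall>x\<in>S. act h x \<in> S)
     \<and> (\<forall>h g. \<forall>x\<in>S. act (h + g) x = p (act h x) (act g x))
     \<and> (\<forall>h. \<forall>x\<in>S. \<forall>y\<in>S. act h (p x y) = p (act h x) (act h y))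
     \<and> (\<forall>c h. \<forall>x\<in>S. act (sc c h) x = s c (act h x) \<and> act h (s c x) = s c (act h x))
     \<and> (\<forall>h g. \<forall>x\<in>S. act (h * g) x = act h (act g x))
     \<and> (\<forall>x\<in>S. act 1 x = x)"

definition module_algebra ::
  "('k::field \<Rightarrow> 'h::ring_1 \<Rightarrow> 'h) \<Rightarrow> ('h \<Rightarrow> 'h list list) \<Rightarrow> ('h \<Rightarrow> 'k) \<Rightarrow> 'h list list
    \<Rightarrow> ('k \<Rightarrow> 'a::ab_group_add \<Rightarrow> 'a) \<Rightarrow> ('h \<Rightarrow> 'a \<Rightarrow> 'a) \<Rightarrow> ('a \<Rightarrow> 'a \<Rightarrow> 'a) \<Rightarrow> 'a \<Rightarrow> bool" where
  "module_algebra sc Dl eps Phi sA act mA uA \<longleftrightarrow>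
     hmodule sc UNIV (+) 0 sA act
   \<and> (\<forall>a a' b. mA (a + a') b = mA a b + mA a' b)
   \<and> (\<forall>a b b'. mA a (b + b') = mA a b + mA a b')
   \<and> (\<forall>c a b. mA (sA c a) b = sA c (mA a b) \<and> mA a (sA c b) = sA c (mA a b))
   \<and> (\<forall>a. mA uA a = a \<and> mA a uA = a)
   \<and> (\<forall>a b d. mA (mA a b) d =
        sum_list (map (\<lambda>w. mA (act (w ! 0) a) (mA (act (w ! 1) b) (act (w ! 2) d))) Phi))
   \<and> (\<forall>h a b. act h (mA a b) = sum_list (map (\<lambda>w. mA (act (w ! 0) a) (act (w ! 1) b)) (Dl h)))
   \<and> (\<forall>h. act h uA = sA (eps h) uA)"

definition invariants :: "('k \<Rightarrow> 'x \<Rightarrow> 'x) \<Rightarrow> ('h \<Rightarrow> 'k) \<Rightarrow> ('h \<Rightarrow> 'x \<Rightarrow> 'x) \<Rightarrow> 'x set" where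
  "invariants s eps act = {x. \<forall>h. act h x = s (eps h) x}"

definition bmodule ::
  "'a::plus set \<Rightarrow> ('a \<Rightarrow> 'a \<Rightarrow> 'a) \<Rightarrow> 'a \<Rightarrow> 'x set \<Rightarrow> ('x \<Rightarrow> 'x \<Rightarrow> 'x) \<Rightarrow> 'x
    \<Rightarrow> ('a \<Rightarrow> 'x \<Rightarrow> 'x) \<Rightarrow> bool" where
  "bmodule B mA uA S p z act \<longleftrightarrow> abgrp S p z
     \<and> (\<forall>b\<in>B. \<forall>x\<in>S. act b x \<in> S)
     \<and> (\<forall>b\<in>B. \<forall>b'\<in>B. \<forall>x\<in>S. act (b + b') x = p (act b x) (act b' x))
     \<and> (\<forall>b\<in>B. \<forall>x\<in>S. \<forall>y\<in>S. act b (p x y) = p (act b x) (act b y))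
     \<and> (\<forall>b\<in>B. \<forall>b'\<in>B. \<forall>x\<in>S. act (mA b b') x = act b (act b' x))
     \<and> (\<forall>x\<in>S. act uA x = x)"

definition hopf_module ::
  "('k::field \<Rightarrow> 'h::ring_1 \<Rightarrow> 'h) \<Rightarrow> ('h \<Rightarrow> 'h list list) \<Rightarrow> 'h list list
    \<Rightarrow> ('k \<Rightarrow> 'a::ab_group_add \<Rightarrow> 'a) \<Rightarrow> ('h \<Rightarrow> 'a \<Rightarrow> 'a) \<Rightarrow> ('a \<Rightarrow> 'a \<Rightarrow> 'a) \<Rightarrow> 'a
    \<Rightarrow> 'x set \<Rightarrow> ('x \<Rightarrow> 'x \<Rightarrow> 'x) \<Rightarrow> 'x \<Rightarrow> ('k \<Rightarrow> 'x \<Rightarrow> 'x)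
    \<Rightarrow> ('h \<Rightarrow> 'x \<Rightarrow> 'x) \<Rightarrow> ('a \<Rightarrow> 'x \<Rightarrow> 'x) \<Rightarrow> bool" where
  "hopf_module sc Dl Phi sA act mA uA S p z s hN aN \<longleftrightarrow>
     hmodule sc S p z s hN
   \<and> (\<forall>a. \<forall>x\<in>S. aN a x \<in> S)
   \<and> (\<forall>a a'. \<forall>x\<in>S. aN (a + a') x = p (aN a x) (aN a' x))
   \<and> (\<forall>a. \<forall>x\<in>S. \<forall>y\<in>S. aN a (p x y) = p (aN a x) (aN a y))
   \<and> (\<forall>c a. \<forall>x\<in>S. aN (sA c a) x = s c (aN a x) \<and> aN a (s c x) = s c (aN a x))
   \<and> (\<forall>a b. \<forall>x\<in>S. aN (mA a b) x =
        gsum p z (map (\<lambda>w. aN (act (w ! 0) a) (aN (act (w ! 1) b) (hN (w ! 2) x))) Phi))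
   \<and> (\<forall>h a. \<forall>x\<in>S. hN h (aN a x) = gsum p z (map (\<lambda>w. aN (act (w ! 0) a) (hN (w ! 1) x)) (Dl h)))
   \<and> (\<forall>x\<in>S. aN uA x = x)"

definition btens_rel ::
  "'a::plus set \<Rightarrow> ('a \<Rightarrow> 'a \<Rightarrow> 'a) \<Rightarrow> ('a \<Rightarrow> 'm::plus \<Rightarrow> 'm) \<Rightarrow> ('a \<times> 'm \<Rightarrow> int) set" where
  "btens_rel B mA bM =
      {(\<lambda>y. delta (a + a', m) y - delta (a, m) y - delta (a', m) y) | a a' m. True}
    \<union> {(\<lambda>y. delta (a, m + m') y - delta (a, m) y - delta (a, m') y) | a m m'. True}
    \<union> {(\<lambda>y. delta (mA a b, m) y - delta (a, bM b m) y) | a b m. b \<in> B}"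

definition tcls :: "('x \<Rightarrow> int) set \<Rightarrow> 'x list \<Rightarrow> 'x list set" where
  "tcls G xs = {ys. teq G xs ys}"

definition tcarrier :: "('x \<Rightarrow> int) set \<Rightarrow> 'x list set set" where
  "tcarrier G = range (tcls G)"

definition trep :: "'x list set \<Rightarrow> 'x list" where
  "trep X = (SOME xs. xs \<in> X)"

definition tplus :: "('x \<Rightarrow> int) set \<Rightarrow> 'x list set \<Rightarrow> 'x list set \<Rightarrow> 'x list set" where
  "tplus G X Y = tcls G (trep X @ trep Y)"

definition tzero :: "('x \<Rightarrow> int) set \<Rightarrow> 'x list set" where
  "tzero G = tcls G []"

definition tscal :: "('a \<times> 'm \<Rightarrow> int) set \<Rightarrow> ('k \<Rightarrow> 'a \<Rightarrow> 'a) \<Rightarrow> 'k \<Rightarrow> ('a \<times> 'm) list set \<Rightarrow> ('a \<times> 'm) list set" where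
  "tscal G sA c X = tcls G (map (\<lambda>(a, m). (sA c a, m)) (trep X))"

definition thact :: "('a \<times> 'm \<Rightarrow> int) set \<Rightarrow> ('h \<Rightarrow> 'a \<Rightarrow> 'a) \<Rightarrow> 'h \<Rightarrow> ('a \<times> 'm) list set \<Rightarrow> ('a \<times> 'm) list set" where
  "thact G act h X = tcls G (map (\<lambda>(a, m). (act h a, m)) (trep X))"

definition taact :: "('a \<times> 'm \<Rightarrow> int) set \<Rightarrow> ('a \<Rightarrow> 'a \<Rightarrow> 'a) \<Rightarrow> 'a \<Rightarrow> ('a \<times> 'm) list set \<Rightarrow> ('a \<times> 'm) list set" where
  "taact G mA b X = tcls G (map (\<lambda>(a, m). (mA b a, m)) (trep X))"

definition tmap :: "('a \<times> 'm \<Rightarrow> int) set \<Rightarrow> ('a \<times> 'm2 \<Rightarrow> int) set \<Rightarrow> ('m2 \<Rightarrow> 'm)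
    \<Rightarrow> ('a \<times> 'm2) list set \<Rightarrow> ('a \<times> 'm) list set" where
  "tmap G G' u = restrict (\<lambda>X. tcls G (map (\<lambda>(a, m). (a, u m)) (trep X))) (tcarrier G')"

definition hopf_homs ::
  "'x set \<Rightarrow> ('x \<Rightarrow> 'x \<Rightarrow> 'x) \<Rightarrow> ('k \<Rightarrow> 'x \<Rightarrow> 'x) \<Rightarrow> ('h \<Rightarrow> 'x \<Rightarrow> 'x) \<Rightarrow> ('a \<Rightarrow> 'x \<Rightarrow> 'x)
   \<Rightarrow> 'y set \<Rightarrow> ('y \<Rightarrow> 'y \<Rightarrow> 'y) \<Rightarrow> ('k \<Rightarrow> 'y \<Rightarrow> 'y) \<Rightarrow> ('h \<Rightarrow> 'y \<Rightarrow> 'y) \<Rightarrow> ('a \<Rightarrow> 'y \<Rightarrow> 'y)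
   \<Rightarrow> ('x \<Rightarrow> 'y) set" where
  "hopf_homs S p s hS aS S' p' s' hS' aS' =
     {f. (\<forall>x\<in>S. f x \<in> S') \<and> (\<forall>x. x \<notin> S \<longrightarrow> f x = undefined)
       \<and> (\<forall>x\<in>S. \<forall>y\<in>S. f (p x y) = p' (f x) (f y))
       \<and> (\<forall>c. \<forall>x\<in>S. f (s c x) = s' c (f x))
       \<and> (\<forall>h. \<forall>x\<in>S. f (hS h x) = hS' h (f x))
       \<and> (\<forall>a. \<forall>x\<in>S. f (aS a x) = aS' a (f x))}"

definition bmod_homs ::
  "'a set \<Rightarrow> 'x set \<Rightarrow> ('x \<Rightarrow> 'x \<Rightarrow> 'x) \<Rightarrow> ('a \<Rightarrow> 'x \<Rightarrow> 'x)
   \<Rightarrow> 'y set \<Rightarrow> ('y \<Rightarrow> 'y \<Rightarrow> 'y) \<Rightarrow> ('a \<Rightarrow> 'y \<Rightarrow> 'y) \<Rightarrow> ('x \<Rightarrow> 'y) set" where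
  "bmod_homs B S p act S' p' act' =
     {f. (\<forall>x\<in>S. f x \<in> S') \<and> (\<forall>x. x \<notin> S \<longrightarrow> f x = undefined)
       \<and> (\<forall>x\<in>S. \<forall>y\<in>S. f (p x y) = p' (f x) (f y))
       \<and> (\<forall>b\<in>B. \<forall>x\<in>S. f (act b x) = act' b (f x))}"

definition adj_unit_map :: "('a \<times> 'm \<Rightarrow> int) set \<Rightarrow> 'a \<Rightarrow> (('a \<times> 'm) list set \<Rightarrow> 'n) \<Rightarrow> 'm \<Rightarrow> 'n" where
  "adj_unit_map G uA f = (\<lambda>m. f (tcls G [(uA, m)]))"

definition adj_inv_map :: "('a \<times> 'm \<Rightarrow> int) set \<Rightarrow> ('a \<Rightarrow> 'n \<Rightarrow> 'n) \<Rightarrow> ('m \<Rightarrow> 'n) \<Rightarrow> ('a \<times> 'm) list set \<Rightarrow> 'n::monoid_add" where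
  "adj_inv_map G aN g = restrict (\<lambda>X. sum_list (map (\<lambda>(a, m). aN a (g m)) (trep X))) (tcarrier G)"

end

theory Submission
  imports Defs "HOL-Library.Multiset"
begin

text \<open>The adjunction is extension and restriction of scalars; the bijection and its naturality are
  formal once one knows that invariants behave strictly associatively: \<open>(ca)b = c(ab)\<close> in \<open>A\<close> and
  \<open>(ab)n = a(bn)\<close> in a Hopf module \<open>N\<close>, for \<open>b \<in> B\<close> and \<open>n \<in> N\<^sup>H\<close>. By quasi-associativity
  both reduce to \<open>(id \<otimes> id \<otimes> \<epsilon>)(\<Phi>) = 1 \<otimes> 1\<close>, which is not an axiom: it follows by applying
  \<open>id \<otimes> id \<otimes> \<epsilon> \<otimes> id\<close> to the pentagon axiom, using the counit property of \<open>\<Delta>\<close>, the normalisation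
  \<open>(id \<otimes> \<epsilon> \<otimes> id)(\<Phi>) = 1 \<otimes> 1\<close>, and finally cancelling \<open>\<Phi>\<close>.

  Elements of \<open>H\<^sup>\<otimes>\<^sup>n\<close> are formal sums of words modulo the multilinearity relations, so an identity in
  \<open>H\<^sup>\<otimes>\<^sup>n\<close> is used by summing a \<open>k\<close>-multilinear functional of the words over both sides.\<close>

lemma fsum_append [simp]: "fsum (xs @ ys) y = fsum xs y + fsum ys y"
  by (simp add: fsum_def)

lemma fsum_Nil [simp]: "fsum [] y = 0"
  by (simp add: fsum_def)

lemma fsum_eq_iff_mset_eq: "(\<forall>y. fsum xs y = fsum ys y) \<longleftrightarrow> mset xs = mset ys"
  by (auto simp: fsum_def multiset_eq_iff count_mset)

lemma subgrp_gen_cong: "f \<in> subgrp_gen G \<Longrightarrow> (\<And>x. f x = g x) \<Longrightarrow> g \<in> subgrp_gen G"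
  by (metis ext)

lemma subgrp_gen_uminus: "g \<in> subgrp_gen G \<Longrightarrow> (\<lambda>x. - g x) \<in> subgrp_gen G"
  by (rule subgrp_gen_cong[OF sg_diff[OF sg_zero]]) auto

lemma subgrp_gen_add: "f \<in> subgrp_gen G \<Longrightarrow> g \<in> subgrp_gen G \<Longrightarrow> (\<lambda>x. f x + g x) \<in> subgrp_gen G"
  by (rule subgrp_gen_cong[OF sg_diff[OF _ subgrp_gen_uminus]]) auto

lemma teq_refl [simp, intro]: "teq G xs xs"
  unfolding teq_def by (rule subgrp_gen_cong[OF sg_zero]) auto

lemma teq_sym: "teq G xs ys \<Longrightarrow> teq G ys xs"
  unfolding teq_def by (rule subgrp_gen_cong[OF subgrp_gen_uminus]) auto

lemma teq_trans [trans]: "teq G xs ys \<Longrightarrow> teq G ys zs \<Longrightarrow> teq G xs zs"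
  unfolding teq_def by (drule (1) subgrp_gen_add, erule subgrp_gen_cong) auto

lemma teq_append: "teq G xs ys \<Longrightarrow> teq G xs' ys' \<Longrightarrow> teq G (xs @ xs') (ys @ ys')"
  unfolding teq_def by (drule (1) subgrp_gen_add, erule subgrp_gen_cong) auto

lemma teq_cancel: "teq G (xs @ zs) (ys @ ws) \<Longrightarrow> teq G ws zs \<Longrightarrow> teq G xs ys"
  unfolding teq_def by (drule (1) subgrp_gen_add, erule subgrp_gen_cong) auto

lemma teq_mset_eq: "mset xs = mset ys \<Longrightarrow> teq G xs ys"
  unfolding teq_def by (rule subgrp_gen_cong[OF sg_zero]) (metis fsum_eq_iff_mset_eq diff_self)

text \<open>An element of the generated subgroup is a difference of two formal sums assembled from generators,
  so a relation between formal sums that holds for generators and is closed under differences holds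
  for all of it.\<close>

lemma teq_fsum_witness:
  assumes "teq R xs ys"
    and gen: "\<And>g. g \<in> R \<Longrightarrow> \<exists>P N. g = (\<lambda>y. fsum P y - fsum N y) \<and> Q P N"
    and Q_Nil: "Q [] []"
    and Q_diff: "\<And>P1 N1 P2 N2. Q P1 N1 \<Longrightarrow> Q P2 N2 \<Longrightarrow> Q (P1 @ N2) (N1 @ P2)"
  shows "\<exists>P N. mset (xs @ N) = mset (ys @ P) \<and> Q P N"
proof -
  have "\<exists>P N. f = (\<lambda>y. fsum P y - fsum N y) \<and> Q P N" if "f \<in> subgrp_gen R" for f
    using that
  proof (induction rule: subgrp_gen.induct)
    case sg_zero
    show ?case using Q_Nil by (intro exI[of _ "[]"]) auto
  next
    case (sg_gen g)
    then show ?case using gen by blast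
  next
    case (sg_diff f g)
    then obtain P1 N1 P2 N2 where "f = (\<lambda>y. fsum P1 y - fsum N1 y)" "Q P1 N1"
      "g = (\<lambda>y. fsum P2 y - fsum N2 y)" "Q P2 N2" by blast
    then show ?case
      by (intro exI[of _ "P1 @ N2"] exI[of _ "N1 @ P2"]) (auto simp: Q_diff)
  qed
  then obtain P N where PN: "(\<lambda>y. fsum xs y - fsum ys y) = (\<lambda>y. fsum P y - fsum N y)" "Q P N"
    using assms(1) unfolding teq_def by blast
  have "fsum (xs @ N) y = fsum (ys @ P) y" for y
    using fun_cong[OF PN(1), of y] by simp
  then have "mset (xs @ N) = mset (ys @ P)"
    using fsum_eq_iff_mset_eq by blast
  with PN(2) show ?thesis by blast
qed

lemma teq_sum_list_map:
  fixes \<phi> :: "'x \<Rightarrow> 'g::cancel_comm_monoid_add"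
  assumes "teq R xs ys"
    and "\<And>g. g \<in> R \<Longrightarrow> \<exists>P N. g = (\<lambda>y. fsum P y - fsum N y) \<and> sum_list (map \<phi> P) = sum_list (map \<phi> N)"
  shows "sum_list (map \<phi> xs) = sum_list (map \<phi> ys)"
proof -
  obtain P N where mset: "mset (xs @ N) = mset (ys @ P)"
    and PN: "sum_list (map \<phi> P) = sum_list (map \<phi> N)"
    using teq_fsum_witness[OF assms] by auto
  have "sum_list (map \<phi> (xs @ N)) = sum_list (map \<phi> (ys @ P))"
    by (metis mset mset_map sum_mset_sum_list)
  then show ?thesis using PN by simp
qed

lemma teq_map:
  assumes "teq R xs ys"
    and "\<And>g. g \<in> R \<Longrightarrow> \<exists>P N. g = (\<lambda>y. fsum P y - fsum N y) \<and> teq R' (map f P) (map f N)"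
  shows "teq R' (map f xs) (map f ys)"
proof -
  obtain P N where mset: "mset (xs @ N) = mset (ys @ P)" and PN: "teq R' (map f P) (map f N)"
    using teq_fsum_witness[OF assms] by (auto intro: teq_append teq_sym)
  have "teq R' (map f xs @ map f N) (map f ys @ map f P)"
    by (metis mset map_append mset_map teq_mset_eq)
  then show ?thesis using PN by (rule teq_cancel)
qed

lemma tcls_eq_iff: "tcls R xs = tcls R ys \<longleftrightarrow> teq R xs ys"
  unfolding tcls_def by (blast intro: teq_sym teq_trans)

lemma teq_trep_tcls: "teq R xs (trep (tcls R xs))"
proof -
  have "xs \<in> tcls R xs" by (simp add: tcls_def)
  then have "trep (tcls R xs) \<in> tcls R xs" unfolding trep_def by (rule someI)
  then show ?thesis by (simp add: tcls_def)
qed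

lemma tcls_trep [simp]: "tcls R (trep (tcls R xs)) = tcls R xs"
  using teq_trep_tcls tcls_eq_iff teq_sym by metis

lemma tcls_in_tcarrier [simp]: "tcls R xs \<in> tcarrier R"
  by (simp add: tcarrier_def)

lemma tcls_trep_tcarrier: "X \<in> tcarrier R \<Longrightarrow> tcls R (trep X) = X"
  by (auto simp: tcarrier_def)

lemma ball_tcarrier: "(\<forall>X\<in>tcarrier R. P X) \<longleftrightarrow> (\<forall>xs. P (tcls R xs))"
  by (auto simp: tcarrier_def)

lemma tcls_lift:
  assumes "\<And>xs ys. teq R xs ys \<Longrightarrow> teq R' (F xs) (F ys)"
  shows "tcls R' (F (trep (tcls R xs))) = tcls R' (F xs)"
  unfolding tcls_eq_iff by (rule assms, rule teq_sym, rule teq_trep_tcls)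

lemma tplus_tcls [simp]: "tplus R (tcls R xs) (tcls R ys) = tcls R (xs @ ys)"
  unfolding tplus_def tcls_eq_iff by (rule teq_append; rule teq_sym, rule teq_trep_tcls)

lemma gsum_tplus_tcls: "gsum (tplus R) (tcls R []) (map (\<lambda>w. tcls R (F w)) L) = tcls R (concat (map F L))"
  by (induction L) (auto simp: gsum_def)

lemma tcls_append_commute: "tcls R (xs @ ys) = tcls R (ys @ xs)"
  unfolding tcls_eq_iff by (rule teq_mset_eq) simp

definition multilinear :: "('k \<Rightarrow> 'h::plus \<Rightarrow> 'h) \<Rightarrow> nat \<Rightarrow> ('h list \<Rightarrow> 'g::ab_group_add) \<Rightarrow> bool" where
  "multilinear sc n T \<longleftrightarrow>
     (\<forall>w i a b. length w = n \<longrightarrow> i < n \<longrightarrow> T (w[i := a + b]) = T (w[i := a]) + T (w[i := b]))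
   \<and> (\<forall>w i c. length w = n \<longrightarrow> i < n \<longrightarrow> T (w[i := sc c (w ! i)]) = T (w[0 := sc c (w ! 0)]))"

lemma multilinear_kteq:
  assumes "multilinear sc n T" "kteq sc n xs ys"
  shows "sum_list (map T xs) = sum_list (map T ys)"
proof (rule teq_sum_list_map[OF assms(2)[unfolded kteq_def]])
  fix g assume "g \<in> ktens_rel sc n"
  then show "\<exists>P N. g = (\<lambda>y. fsum P y - fsum N y) \<and> sum_list (map T P) = sum_list (map T N)"
    unfolding ktens_rel_def
  proof (elim UnE CollectE exE conjE)
    fix w i a b assume g: "g = (\<lambda>y. delta (w[i := a + b]) y - delta (w[i := a]) y - delta (w[i := b]) y)"
      and "length w = n" "i < n"
    then have "T (w[i := a + b]) = T (w[i := a]) + T (w[i := b])"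
      using assms(1) unfolding multilinear_def by blast
    moreover have "g = (\<lambda>y. fsum [w[i := a + b]] y - fsum [w[i := a], w[i := b]] y)"
      unfolding g fsum_def delta_def by (rule ext) simp
    ultimately show ?thesis by (intro exI conjI) (assumption, simp)
  next
    fix w i j c assume g: "g = (\<lambda>y. delta (w[i := sc c (w ! i)]) y - delta (w[j := sc c (w ! j)]) y)"
      and "length w = n" "i < n" "j < n"
    then have "T (w[i := sc c (w ! i)]) = T (w[j := sc c (w ! j)])"
      using assms(1) unfolding multilinear_def by metis
    moreover have "g = (\<lambda>y. fsum [w[i := sc c (w ! i)]] y - fsum [w[j := sc c (w ! j)]] y)"
      unfolding g fsum_def delta_def by (rule ext) simp
    ultimately show ?thesis by (intro exI conjI) (assumption, simp)
  qed
qed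

lemma length_2_conv: "length w = 2 \<Longrightarrow> w = [w!0, w!1]"
  by (auto simp: numeral_2_eq_2 length_Suc_conv)

lemma length_3_conv: "length w = 3 \<Longrightarrow> w = [w!0, w!1, w!2]"
  by (auto simp: numeral_3_eq_3 length_Suc_conv)

lemma length_4_conv: "length w = 4 \<Longrightarrow> w = [w!0, w!1, w!2, w!3]"
  by (auto simp: eval_nat_numeral length_Suc_conv)

lemma less_3_cases: "(i::nat) < 3 \<Longrightarrow> i = 0 \<or> i = 1 \<or> i = 2"
  by auto

lemma less_4_cases: "(i::nat) < 4 \<Longrightarrow> i = 0 \<or> i = 1 \<or> i = 2 \<or> i = 3"
  by auto

lemma multilinear2I:
  assumes "\<And>a b y. T [a+b, y] = T [a, y] + T [b, y]" "\<And>x a b. T [x, a+b] = T [x, a] + T [x, b]"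
    and "\<And>c x y. T [x, sc c y] = T [sc c x, y]"
  shows "multilinear sc 2 T"
  unfolding multilinear_def
proof (intro conjI allI impI)
  fix w :: "'a list" and i :: nat and a b assume l: "length w = 2" "i < 2"
  then obtain x y where w: "w = [x, y]" by (metis length_2_conv)
  show "T (w[i := a + b]) = T (w[i := a]) + T (w[i := b])"
    using less_2_cases[OF l(2)] by (elim disjE) (simp_all add: w assms)
next
  fix w :: "'a list" and i :: nat and c assume l: "length w = 2" "i < 2"
  then obtain x y where w: "w = [x, y]" by (metis length_2_conv)
  show "T (w[i := sc c (w ! i)]) = T (w[0 := sc c (w ! 0)])"
    using less_2_cases[OF l(2)] by (elim disjE) (simp_all add: w assms)
qed

lemma multilinear3I:
  assumes "\<And>a b y z. T [a+b, y, z] = T [a, y, z] + T [b, y, z]"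
    and "\<And>x a b z. T [x, a+b, z] = T [x, a, z] + T [x, b, z]"
    and "\<And>x y a b. T [x, y, a+b] = T [x, y, a] + T [x, y, b]"
    and "\<And>c x y z. T [x, sc c y, z] = T [sc c x, y, z]" "\<And>c x y z. T [x, y, sc c z] = T [sc c x, y, z]"
  shows "multilinear sc 3 T"
  unfolding multilinear_def
proof (intro conjI allI impI)
  fix w :: "'a list" and i :: nat and a b assume l: "length w = 3" "i < 3"
  then obtain x y z where w: "w = [x, y, z]" by (metis length_3_conv)
  show "T (w[i := a + b]) = T (w[i := a]) + T (w[i := b])"
    using less_3_cases[OF l(2)] by (elim disjE) (simp_all add: w assms numeral_2_eq_2)
next
  fix w :: "'a list" and i :: nat and c assume l: "length w = 3" "i < 3"
  then obtain x y z where w: "w = [x, y, z]" by (metis length_3_conv)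
  show "T (w[i := sc c (w ! i)]) = T (w[0 := sc c (w ! 0)])"
    using less_3_cases[OF l(2)] by (elim disjE) (simp_all add: w assms numeral_2_eq_2)
qed

lemma multilinear4I:
  assumes "\<And>a b y z u. T [a+b, y, z, u] = T [a, y, z, u] + T [b, y, z, u]"
    and "\<And>x a b z u. T [x, a+b, z, u] = T [x, a, z, u] + T [x, b, z, u]"
    and "\<And>x y a b u. T [x, y, a+b, u] = T [x, y, a, u] + T [x, y, b, u]"
    and "\<And>x y z a b. T [x, y, z, a+b] = T [x, y, z, a] + T [x, y, z, b]"
    and "\<And>c x y z u. T [x, sc c y, z, u] = T [sc c x, y, z, u]"
    and "\<And>c x y z u. T [x, y, sc c z, u] = T [sc c x, y, z, u]"
    and "\<And>c x y z u. T [x, y, z, sc c u] = T [sc c x, y, z, u]"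
  shows "multilinear sc 4 T"
  unfolding multilinear_def
proof (intro conjI allI impI)
  fix w :: "'a list" and i :: nat and a b assume l: "length w = 4" "i < 4"
  then obtain x y z u where w: "w = [x, y, z, u]" by (metis length_4_conv)
  show "T (w[i := a + b]) = T (w[i := a]) + T (w[i := b])"
    using less_4_cases[OF l(2)] by (elim disjE) (simp_all add: w assms numeral_2_eq_2 numeral_3_eq_3)
next
  fix w :: "'a list" and i :: nat and c assume l: "length w = 4" "i < 4"
  then obtain x y z u where w: "w = [x, y, z, u]" by (metis length_4_conv)
  show "T (w[i := sc c (w ! i)]) = T (w[0 := sc c (w ! 0)])"
    using less_4_cases[OF l(2)] by (elim disjE) (simp_all add: w assms numeral_2_eq_2 numeral_3_eq_3)
qed

lemma multilinear2D:
  assumes "multilinear sc 2 T"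
  shows "T [a+b, y] = T [a, y] + T [b, y]" "T [x, a+b] = T [x, a] + T [x, b]"
    and "T [x, sc c y] = T [sc c x, y]"
  using assms[unfolded multilinear_def, THEN conjunct1, rule_format, of "[a, y]" 0 a b]
    assms[unfolded multilinear_def, THEN conjunct1, rule_format, of "[x, a]" 1 a b]
    assms[unfolded multilinear_def, THEN conjunct2, rule_format, of "[x, y]" 1 c]
  by simp_all

lemma multilinear3D:
  assumes "multilinear sc 3 T"
  shows "T [a+b, y, z] = T [a, y, z] + T [b, y, z]" "T [x, a+b, z] = T [x, a, z] + T [x, b, z]"
    and "T [x, y, a+b] = T [x, y, a] + T [x, y, b]"
    and "T [x, sc c y, z] = T [sc c x, y, z]" "T [x, y, sc c z] = T [sc c x, y, z]"
  using assms[unfolded multilinear_def, THEN conjunct1, rule_format, of "[a, y, z]" 0 a b]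
    assms[unfolded multilinear_def, THEN conjunct1, rule_format, of "[x, a, z]" 1 a b]
    assms[unfolded multilinear_def, THEN conjunct1, rule_format, of "[x, y, a]" 2 a b]
    assms[unfolded multilinear_def, THEN conjunct2, rule_format, of "[x, y, z]" 1 c]
    assms[unfolded multilinear_def, THEN conjunct2, rule_format, of "[x, y, z]" 2 c]
  by (simp_all add: numeral_2_eq_2)

lemma multilinear3_sum_list:
  fixes T :: "'h::comm_monoid_add list \<Rightarrow> 'g::ab_group_add"
  assumes "multilinear sc 3 T"
  shows "T [y, sum_list (map f xs), z] = (\<Sum>x\<leftarrow>xs. T [y, f x, z])"
    and "T [y, z, sum_list (map f xs)] = (\<Sum>x\<leftarrow>xs. T [y, z, f x])"
proof -
  have "T [y, 0, z] = 0" "T [y, z, 0] = 0"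
    using multilinear3D(2)[OF assms, of y 0 0 z] multilinear3D(3)[OF assms, of y z 0 0] by simp_all
  then show "T [y, sum_list (map f xs), z] = (\<Sum>x\<leftarrow>xs. T [y, f x, z])"
    and "T [y, z, sum_list (map f xs)] = (\<Sum>x\<leftarrow>xs. T [y, z, f x])"
    by (induction xs) (auto simp: multilinear3D[OF assms])
qed

lemma sum_list_map_cong: "(\<And>x. x \<in> set xs \<Longrightarrow> f x = g x) \<Longrightarrow> sum_list (map f xs) = sum_list (map g xs)"
  by (simp cong: map_cong)

lemma multilinear_sum_list:
  assumes "\<And>x. x \<in> set X \<Longrightarrow> multilinear sc n (F x)"
  shows "multilinear sc n (\<lambda>u. \<Sum>x\<leftarrow>X. F x u)"
  using assms unfolding multilinear_def
  by (auto simp: sum_list_addf[symmetric] intro!: sum_list_map_cong)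

lemma sum_list_map_concat: "sum_list (map f (concat xss)) = (\<Sum>xs\<leftarrow>xss. sum_list (map f xs))"
  by (induction xss) auto

lemma sum_list_tmul: "sum_list (map T (tmul X Y)) = (\<Sum>x\<leftarrow>X. \<Sum>y\<leftarrow>Y. T (map2 (*) x y))"
  by (simp add: tmul_def sum_list_map_concat o_def)

lemma sum_list_tapply:
  "sum_list (map T (tapply i F X)) = (\<Sum>w\<leftarrow>X. \<Sum>v\<leftarrow>F (w!i). T (take i w @ v @ drop (Suc i) w))"
  by (simp add: tapply_def sum_list_map_concat o_def)

lemma sum_list_swap:
  fixes f :: "_ \<Rightarrow> _ \<Rightarrow> 'g::comm_monoid_add"
  shows "(\<Sum>x\<leftarrow>X. \<Sum>y\<leftarrow>Y. f x y) = (\<Sum>y\<leftarrow>Y. \<Sum>x\<leftarrow>X. f x y)"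
  by (induction X) (auto simp: sum_list_addf)

lemma map2_mult_assoc:
  fixes u v w :: "'h::semigroup_mult list"
  shows "map2 (*) (map2 (*) u v) w = map2 (*) u (map2 (*) v w)"
  by (rule nth_equalityI) (auto simp: mult.assoc)

lemma map2_list_update_right: "map2 f x (w[i := a]) = (map2 f x w)[i := f (x!i) a]"
proof (rule nth_equalityI)
  fix j assume "j < length (map2 f x (w[i := a]))"
  then show "map2 f x (w[i := a]) ! j = (map2 f x w)[i := f (x!i) a] ! j"
    by (cases "i = j") (auto simp: nth_list_update)
qed simp

lemma map2_list_update_left: "map2 f (w[i := a]) y = (map2 f w y)[i := f a (y!i)]"
proof (rule nth_equalityI)
  fix j assume "j < length (map2 f (w[i := a]) y)"
  then show "map2 f (w[i := a]) y ! j = (map2 f w y)[i := f a (y!i)] ! j"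
    by (cases "i = j") (auto simp: nth_list_update)
qed simp

section \<open>Quasi-bialgebras: the right counit property of \<open>\<Phi>\<close>\<close>

locale quasi_bialg =
  fixes sc :: "'k::field \<Rightarrow> 'h::ring_1 \<Rightarrow> 'h" and Dl :: "'h \<Rightarrow> 'h list list" and eps :: "'h \<Rightarrow> 'k"
    and Phi Phinv :: "'h list list"
  assumes quasi_bialgebra: "quasi_bialgebra sc Dl eps Phi Phinv"
begin

lemma k_algebra: "k_algebra sc"
  using quasi_bialgebra by (simp add: quasi_bialgebra_def)

lemma sc_add: "sc c (x + y) = sc c x + sc c y"
  and sc_add_scalar: "sc (c + d) x = sc c x + sc d x"
  and sc_mult_scalar: "sc (c * d) x = sc c (sc d x)"
  and sc_one [simp]: "sc 1 x = x"
  using k_algebra unfolding k_algebra_def kvs_def by blast+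

lemma sc_mult_left: "sc c (x * y) = sc c x * y"
  and sc_mult_right: "sc c (x * y) = x * sc c y"
  using k_algebra unfolding k_algebra_def by blast+

lemma sc_commute: "sc c (sc d x) = sc d (sc c x)"
  by (metis sc_mult_scalar mult.commute)

lemma Delta_length: "w \<in> set (Dl h) \<Longrightarrow> length w = 2"
  and Delta_add: "kteq sc 2 (Dl (x + y)) (Dl x @ Dl y)"
  and Delta_sc: "kteq sc 2 (Dl (sc c x)) (map (\<lambda>w. [sc c (w ! 0), w ! 1]) (Dl x))"
  and Delta_one: "kteq sc 2 (Dl 1) [[1, 1]]"
  and eps_add: "eps (x + y) = eps x + eps y"
  and eps_sc: "eps (sc c x) = c * eps x"
  and eps_mult: "eps (x * y) = eps x * eps y"
  and eps_one [simp]: "eps 1 = 1"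
  and Phi_length: "w \<in> set Phi \<Longrightarrow> length w = 3"
  and Phinv_length: "w \<in> set Phinv \<Longrightarrow> length w = 3"
  and Phinv_Phi: "kteq sc 3 (tmul Phinv Phi) [[1, 1, 1]]"
  and counit_left: "(\<Sum>w\<leftarrow>Dl h. sc (eps (w ! 1)) (w ! 0)) = h"
  and counit_right: "(\<Sum>w\<leftarrow>Dl h. sc (eps (w ! 0)) (w ! 1)) = h"
  and pentagon: "kteq sc 4 (tmul (tapply 2 Dl Phi) (tapply 0 Dl Phi))
               (tmul (tmul (map (\<lambda>w. 1 # w) Phi) (tapply 1 Dl Phi)) (map (\<lambda>w. w @ [1]) Phi))"
  and Phi_counit_middle: "kteq sc 2 (map (\<lambda>w. [sc (eps (w ! 1)) (w ! 0), w ! 2]) Phi) [[1, 1]]"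
  using quasi_bialgebra unfolding quasi_bialgebra_def by blast+

lemma eps_Delta: "eps h = (\<Sum>w\<leftarrow>Dl h. eps (w!0) * eps (w!1))"
proof -
  have "eps 0 = 0"
    using eps_add[of 0 0] by (metis add.right_neutral add_left_cancel)
  then have eps_sum_list: "eps (sum_list (map f xs)) = (\<Sum>x\<leftarrow>xs. eps (f x))" for f and xs :: "'h list list"
    by (induction xs) (auto simp: eps_add)
  show ?thesis
    by (subst (1) counit_left[of h, symmetric]) (simp add: eps_sum_list eps_sc mult.commute)
qed

lemma sum_Delta_add: "multilinear sc 2 T \<Longrightarrow> (\<Sum>v\<leftarrow>Dl (x + y). T v) = (\<Sum>v\<leftarrow>Dl x. T v) + (\<Sum>v\<leftarrow>Dl y. T v)"
  using multilinear_kteq[OF _ Delta_add] by simp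

lemma sum_Delta_sc: "multilinear sc 2 T \<Longrightarrow> (\<Sum>v\<leftarrow>Dl (sc c x). T v) = (\<Sum>v\<leftarrow>Dl x. T [sc c (v!0), v!1])"
  using multilinear_kteq[OF _ Delta_sc] by (simp add: o_def)

lemma sum_Delta_one: "multilinear sc 2 T \<Longrightarrow> (\<Sum>v\<leftarrow>Dl 1. T v) = T [1, 1]"
  using multilinear_kteq[OF _ Delta_one] by simp

lemma sum_Phi_counit_middle: "multilinear sc 2 T \<Longrightarrow> (\<Sum>w\<leftarrow>Phi. T [sc (eps (w!1)) (w!0), w!2]) = T [1, 1]"
  using multilinear_kteq[OF _ Phi_counit_middle] by (simp add: o_def)

lemma sum_Phinv_Phi: "multilinear sc 3 T \<Longrightarrow> (\<Sum>x\<leftarrow>Phinv. \<Sum>w\<leftarrow>Phi. T (map2 (*) x w)) = T [1, 1, 1]"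
  using multilinear_kteq[OF _ Phinv_Phi] by (simp add: sum_list_tmul)

lemma multilinear_mult_left:
  assumes T: "multilinear sc n T" and lx: "length x = n"
  shows "multilinear sc n (\<lambda>u. T (map2 (*) x u))"
  unfolding multilinear_def
proof (intro conjI allI impI)
  fix w :: "'h list" and i :: nat and a b assume l: "length w = n" "i < n"
  have "T ((map2 (*) x w)[i := x!i * a + x!i * b])
      = T ((map2 (*) x w)[i := x!i * a]) + T ((map2 (*) x w)[i := x!i * b])"
    using T l lx unfolding multilinear_def by simp
  then show "T (map2 (*) x (w[i := a + b])) = T (map2 (*) x (w[i := a])) + T (map2 (*) x (w[i := b]))"
    by (simp add: map2_list_update_right distrib_left)
next
  fix w :: "'h list" and i :: nat and c assume l: "length w = n" "i < n"
  have "length (map2 (*) x w) = n" using l lx by simp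
  then have "T ((map2 (*) x w)[i := sc c ((map2 (*) x w) ! i)]) = T ((map2 (*) x w)[0 := sc c ((map2 (*) x w) ! 0)])"
    using T l unfolding multilinear_def by blast
  then show "T (map2 (*) x (w[i := sc c (w ! i)])) = T (map2 (*) x (w[0 := sc c (w ! 0)]))"
    using l lx by (simp add: map2_list_update_right sc_mult_right)
qed

lemma multilinear_mult_right:
  assumes T: "multilinear sc n T" and lx: "length x = n"
  shows "multilinear sc n (\<lambda>u. T (map2 (*) u x))"
  unfolding multilinear_def
proof (intro conjI allI impI)
  fix w :: "'h list" and i :: nat and a b assume l: "length w = n" "i < n"
  have "T ((map2 (*) w x)[i := a * x!i + b * x!i])
      = T ((map2 (*) w x)[i := a * x!i]) + T ((map2 (*) w x)[i := b * x!i])"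
    using T l lx unfolding multilinear_def by simp
  then show "T (map2 (*) (w[i := a + b]) x) = T (map2 (*) (w[i := a]) x) + T (map2 (*) (w[i := b]) x)"
    by (simp add: map2_list_update_left distrib_right)
next
  fix w :: "'h list" and i :: nat and c assume l: "length w = n" "i < n"
  have "length (map2 (*) w x) = n" using l lx by simp
  then have "T ((map2 (*) w x)[i := sc c ((map2 (*) w x) ! i)]) = T ((map2 (*) w x)[0 := sc c ((map2 (*) w x) ! 0)])"
    using T l unfolding multilinear_def by blast
  then show "T (map2 (*) (w[i := sc c (w ! i)]) x) = T (map2 (*) (w[0 := sc c (w ! 0)]) x)"
    using l lx by (simp add: map2_list_update_left sc_mult_left)
qed

text \<open>The map \<open>id \<otimes> id \<otimes> \<epsilon> \<otimes> id : H\<^sup>\<otimes>\<^sup>4 \<rightarrow> H\<^sup>\<otimes>\<^sup>3\<close> on words.\<close>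

definition contract :: "'h list \<Rightarrow> 'h list" where
  "contract u = [u!0, u!1, sc (eps (u!2)) (u!3)]"

lemma length_contract [simp]: "length (contract u) = 3"
  by (simp add: contract_def)

lemma multilinear_contract:
  assumes T: "multilinear sc 3 T" shows "multilinear sc 4 (\<lambda>u. T (contract u))"
  using multilinear3D[OF T]
  by (intro multilinear4I)
     (simp_all add: contract_def eps_add sc_add sc_add_scalar eps_sc sc_mult_scalar sc_commute)

lemma contract_map2_mult:
  assumes "length u = 4" "length v = 4"
  shows "contract (map2 (*) u v) = map2 (*) (contract u) (contract v)"
proof -
  obtain u0 u1 u2 u3 where u: "u = [u0, u1, u2, u3]" by (metis assms(1) length_4_conv)
  obtain v0 v1 v2 v3 where v: "v = [v0, v1, v2, v3]" by (metis assms(2) length_4_conv)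
  have "sc (eps u2) u3 * sc (eps v2) v3 = sc (eps u2 * eps v2) (u3 * v3)"
    by (simp add: sc_mult_left[symmetric] sc_mult_right[symmetric] sc_mult_scalar sc_commute)
  then show ?thesis by (simp add: u v contract_def eps_mult)
qed

lemma map2_mult_ones3: "length (x::'h list) = 3 \<Longrightarrow> map2 (*) [1, 1, 1] x = x"
  by (subst (1 2) length_3_conv[of x]) auto

lemma contract_map2_mult_ones3: "map2 (*) (contract a) [1, 1, 1] = contract a"
  by (simp add: contract_def)

lemma length_tapply_Phi: "x \<in> set (tapply i Dl Phi) \<Longrightarrow> i < 3 \<Longrightarrow> length x = 4"
  by (auto simp: tapply_def Phi_length Delta_length)

lemma tapply_word:
  assumes "length w = 3" "length v = 2"
  shows "take 0 w @ v @ drop (Suc 0) w = [v!0, v!1, w!1, w!2]"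
    and "take 1 w @ v @ drop (Suc 1) w = [w!0, v!0, v!1, w!2]"
    and "take 2 w @ v @ drop (Suc 2) w = [w!0, w!1, v!0, v!1]"
  by (subst (1 2) length_3_conv[OF assms(1)], subst length_2_conv[OF assms(2)], simp add: numeral_2_eq_2)+

lemma sum_contract_Delta_slot2:
  assumes T: "multilinear sc 3 T"
  shows "(\<Sum>a\<leftarrow>tapply 2 Dl Phi. T (contract a)) = (\<Sum>w\<leftarrow>Phi. T w)"
  unfolding sum_list_tapply
proof (intro sum_list_map_cong)
  fix w assume w: "w \<in> set Phi"
  have "(\<Sum>v\<leftarrow>Dl (w ! 2). T (contract (take 2 w @ v @ drop (Suc 2) w)))
      = (\<Sum>v\<leftarrow>Dl (w ! 2). T [w!0, w!1, sc (eps (v!0)) (v!1)])"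
  proof (intro sum_list_map_cong)
    fix v assume "v \<in> set (Dl (w ! 2))"
    then show "T (contract (take 2 w @ v @ drop (Suc 2) w)) = T [w!0, w!1, sc (eps (v!0)) (v!1)]"
      using tapply_word(3)[OF Phi_length[OF w] Delta_length] by (simp add: contract_def)
  qed
  also have "\<dots> = T [w!0, w!1, \<Sum>v\<leftarrow>Dl (w!2). sc (eps (v!0)) (v!1)]"
    by (simp add: multilinear3_sum_list[OF T])
  also have "\<dots> = T w"
    by (simp only: counit_right, subst (2) length_3_conv[OF Phi_length[OF w]], rule refl)
  finally show "(\<Sum>v\<leftarrow>Dl (w ! 2). T (contract (take 2 w @ v @ drop (Suc 2) w))) = T w" .
qed

lemma sum_contract_Delta_slot1:
  assumes T: "multilinear sc 3 T"
  shows "(\<Sum>a\<leftarrow>tapply 1 Dl Phi. T (contract a)) = (\<Sum>w\<leftarrow>Phi. T w)"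
  unfolding sum_list_tapply
proof (intro sum_list_map_cong)
  fix w assume w: "w \<in> set Phi"
  have "(\<Sum>v\<leftarrow>Dl (w ! 1). T (contract (take 1 w @ v @ drop (Suc 1) w)))
      = (\<Sum>v\<leftarrow>Dl (w ! 1). T [w!0, sc (eps (v!1)) (v!0), w!2])"
  proof (intro sum_list_map_cong)
    fix v assume "v \<in> set (Dl (w ! 1))"
    then show "T (contract (take 1 w @ v @ drop (Suc 1) w)) = T [w!0, sc (eps (v!1)) (v!0), w!2]"
      using tapply_word(2)[OF Phi_length[OF w] Delta_length]
      by (simp add: contract_def multilinear3D(4,5)[OF T] numeral_2_eq_2 numeral_3_eq_3)
  qed
  also have "\<dots> = T [w!0, \<Sum>v\<leftarrow>Dl (w!1). sc (eps (v!1)) (v!0), w!2]"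
    by (simp add: multilinear3_sum_list[OF T])
  also have "\<dots> = T w"
    by (simp only: counit_left, subst (2) length_3_conv[OF Phi_length[OF w]], rule refl)
  finally show "(\<Sum>v\<leftarrow>Dl (w ! 1). T (contract (take 1 w @ v @ drop (Suc 1) w))) = T w" .
qed

lemma sum_contract_Delta_slot0:
  assumes T: "multilinear sc 3 T"
  shows "(\<Sum>b\<leftarrow>tapply 0 Dl Phi. T (contract b)) = T [1, 1, 1]"
proof -
  note D = multilinear3D[OF T]
  have T2: "multilinear sc 2 (\<lambda>v. T [v!0, v!1, z])" for z
    using D by (intro multilinear2I) auto
  define S where "S u = (\<Sum>v\<leftarrow>Dl (u!0). T [v!0, v!1, u!1])" for u
  have S: "multilinear sc 2 S"
  proof (rule multilinear2I)
    show "S [a + b, y] = S [a, y] + S [b, y]" for a b y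
      unfolding S_def using sum_Delta_add[OF T2[of y]] by simp
    show "S [x, a + b] = S [x, a] + S [x, b]" for x a b
      unfolding S_def by (simp add: D(3) sum_list_addf)
    show "S [x, sc c y] = S [sc c x, y]" for c x y
      unfolding S_def using sum_Delta_sc[OF T2[of y]] by (simp add: D(5))
  qed
  have "(\<Sum>b\<leftarrow>tapply 0 Dl Phi. T (contract b)) = (\<Sum>w\<leftarrow>Phi. S [w!0, sc (eps (w!1)) (w!2)])"
    unfolding sum_list_tapply S_def nth_Cons_0
  proof (intro sum_list_map_cong)
    fix w v assume "w \<in> set Phi" "v \<in> set (Dl (w ! 0))"
    then show "T (contract (take 0 w @ v @ drop (Suc 0) w))
        = T [v!0, v!1, [w!0, sc (eps (w!1)) (w!2)] ! 1]"
      using tapply_word(1)[OF Phi_length Delta_length] by (simp add: contract_def)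
  qed
  also have "\<dots> = (\<Sum>w\<leftarrow>Phi. S [sc (eps (w!1)) (w!0), w!2])"
    by (simp add: multilinear2D(3)[OF S])
  also have "\<dots> = S [1, 1]" by (rule sum_Phi_counit_middle[OF S])
  also have "\<dots> = T [1, 1, 1]" unfolding S_def using sum_Delta_one[OF T2] by simp
  finally show ?thesis .
qed

lemma sum_contract_one_Phi:
  assumes T: "multilinear sc 3 T"
  shows "(\<Sum>a\<leftarrow>map (\<lambda>w. 1 # w) Phi. T (contract a)) = T [1, 1, 1]"
proof -
  have T2: "multilinear sc 2 (\<lambda>v. T [1, v!0, v!1])"
    using multilinear3D[OF T] by (intro multilinear2I) auto
  have "(\<Sum>a\<leftarrow>map (\<lambda>w. 1 # w) Phi. T (contract a)) = (\<Sum>w\<leftarrow>Phi. T [1, sc (eps (w!1)) (w!0), w!2])"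
    by (simp add: o_def contract_def numeral_2_eq_2 numeral_3_eq_3 multilinear3D(4,5)[OF T])
  also have "\<dots> = T [1, 1, 1]" using sum_Phi_counit_middle[OF T2] by simp
  finally show ?thesis .
qed

text \<open>Applying \<open>contract\<close> to both sides of the pentagon axiom: the left side collapses to \<open>\<Phi>\<close>,
  the right side to \<open>\<Phi> \<cdot> contract (\<Phi> \<otimes> 1)\<close>.\<close>

lemma sum_Phi_eq_Phi_mult_contract:
  assumes T: "multilinear sc 3 T"
  shows "(\<Sum>w\<leftarrow>Phi. T w) = (\<Sum>w\<leftarrow>Phi. \<Sum>r\<leftarrow>Phi. T (map2 (*) w (contract (r @ [1]))))"
proof -
  let ?P1 = "map (\<lambda>w. 1 # w) Phi" and ?Q = "tapply 1 Dl Phi" and ?R = "map (\<lambda>w. w @ [1]) Phi"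
  have pent: "(\<Sum>u\<leftarrow>tmul (tapply 2 Dl Phi) (tapply 0 Dl Phi). T (contract u))
      = (\<Sum>u\<leftarrow>tmul (tmul ?P1 ?Q) ?R. T (contract u))"
    using multilinear_kteq[OF multilinear_contract[OF T] pentagon] .
  have "(\<Sum>u\<leftarrow>tmul (tapply 2 Dl Phi) (tapply 0 Dl Phi). T (contract u))
      = (\<Sum>a\<leftarrow>tapply 2 Dl Phi. \<Sum>b\<leftarrow>tapply 0 Dl Phi. T (map2 (*) (contract a) (contract b)))"
    unfolding sum_list_tmul
    by (intro sum_list_map_cong)
       (simp add: contract_map2_mult length_tapply_Phi)
  also have "\<dots> = (\<Sum>a\<leftarrow>tapply 2 Dl Phi. T (contract a))"
    using sum_contract_Delta_slot0[OF multilinear_mult_left[OF T length_contract]]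
    by (simp add: contract_map2_mult_ones3)
  also have "\<dots> = (\<Sum>w\<leftarrow>Phi. T w)" by (rule sum_contract_Delta_slot2[OF T])
  finally have lhs: "(\<Sum>u\<leftarrow>tmul (tapply 2 Dl Phi) (tapply 0 Dl Phi). T (contract u)) = (\<Sum>w\<leftarrow>Phi. T w)" .
  have "(\<Sum>u\<leftarrow>tmul (tmul ?P1 ?Q) ?R. T (contract u))
      = (\<Sum>p\<leftarrow>?P1. \<Sum>q\<leftarrow>?Q. \<Sum>r\<leftarrow>?R. T (map2 (*) (contract p) (map2 (*) (contract q) (contract r))))"
    unfolding sum_list_tmul
    by (intro sum_list_map_cong)
       (auto simp: contract_map2_mult map2_mult_assoc length_tapply_Phi Phi_length)
  also have "\<dots> = (\<Sum>q\<leftarrow>?Q. \<Sum>r\<leftarrow>?R. T (map2 (*) (contract q) (contract r)))"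
  proof -
    have "multilinear sc 3 (\<lambda>y. \<Sum>q\<leftarrow>?Q. \<Sum>r\<leftarrow>?R. T (map2 (*) y (map2 (*) (contract q) (contract r))))"
      by (intro multilinear_sum_list multilinear_mult_right[OF T]) simp
    from sum_contract_one_Phi[OF this] show ?thesis by (simp add: map2_mult_ones3)
  qed
  also have "\<dots> = (\<Sum>w\<leftarrow>Phi. \<Sum>r\<leftarrow>?R. T (map2 (*) w (contract r)))"
    by (rule sum_contract_Delta_slot1)
       (intro multilinear_sum_list multilinear_mult_right[OF T], simp)
  finally show ?thesis using lhs pent by (simp add: o_def)
qed

lemma sum_contract_Phi_one:
  assumes T: "multilinear sc 3 T"
  shows "(\<Sum>r\<leftarrow>Phi. T (contract (r @ [1]))) = T [1, 1, 1]"
proof -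
  let ?c = "\<lambda>r. contract (r @ [1])"
  have T': "multilinear sc 3 (\<lambda>u. \<Sum>x\<leftarrow>Phinv. T (map2 (*) x u))"
    by (intro multilinear_sum_list multilinear_mult_left[OF T]) (simp add: Phinv_length)
  have T'': "multilinear sc 3 (\<lambda>q. \<Sum>r\<leftarrow>Phi. T (map2 (*) q (?c r)))"
    by (intro multilinear_sum_list multilinear_mult_right[OF T]) simp
  have "T [1, 1, 1] = (\<Sum>x\<leftarrow>Phinv. \<Sum>w\<leftarrow>Phi. T (map2 (*) x w))"
    using sum_Phinv_Phi[OF T] by simp
  also have "\<dots> = (\<Sum>w\<leftarrow>Phi. \<Sum>x\<leftarrow>Phinv. T (map2 (*) x w))"
    by (rule sum_list_swap)
  also have "\<dots> = (\<Sum>w\<leftarrow>Phi. \<Sum>r\<leftarrow>Phi. \<Sum>x\<leftarrow>Phinv. T (map2 (*) x (map2 (*) w (?c r))))"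
    by (rule sum_Phi_eq_Phi_mult_contract[OF T'])
  also have "\<dots> = (\<Sum>w\<leftarrow>Phi. \<Sum>x\<leftarrow>Phinv. \<Sum>r\<leftarrow>Phi. T (map2 (*) (map2 (*) x w) (?c r)))"
    by (rule sum_list_map_cong) (simp add: sum_list_swap[of _ Phi] map2_mult_assoc)
  also have "\<dots> = (\<Sum>x\<leftarrow>Phinv. \<Sum>w\<leftarrow>Phi. \<Sum>r\<leftarrow>Phi. T (map2 (*) (map2 (*) x w) (?c r)))"
    by (rule sum_list_swap)
  also have "\<dots> = (\<Sum>r\<leftarrow>Phi. T (?c r))"
    using sum_Phinv_Phi[OF T''] by (simp add: map2_mult_ones3)
  finally show ?thesis ..
qed

theorem sum_Phi_counit_right:
  assumes T: "multilinear sc 2 T"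
  shows "(\<Sum>w\<leftarrow>Phi. T [sc (eps (w!2)) (w!0), w!1]) = T [1, 1]"
proof -
  note D = multilinear2D[OF T]
  define T3 where "T3 u = T [sc (eps (u!2)) (u!0), u!1]" for u
  have "multilinear sc 3 T3"
    by (intro multilinear3I)
       (simp_all add: T3_def sc_add D eps_add sc_add_scalar sc_commute eps_sc sc_mult_scalar)
  from sum_contract_Phi_one[OF this]
  have "(\<Sum>r\<leftarrow>Phi. T3 (contract (r @ [1]))) = T [1, 1]"
    by (simp add: T3_def)
  moreover have "(\<Sum>r\<leftarrow>Phi. T3 (contract (r @ [1]))) = (\<Sum>w\<leftarrow>Phi. T [sc (eps (w!2)) (w!0), w!1])"
    by (intro sum_list_map_cong)
       (simp add: T3_def contract_def nth_append Phi_length eps_sc)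
  ultimately show ?thesis by simp
qed

end

section \<open>Invariants act strictly associatively\<close>

lemma gsum_plus_zero: "gsum (+) 0 xs = sum_list xs"
  by (simp add: gsum_def sum_list.eq_foldr)

locale module_alg = quasi_bialg sc Dl eps Phi Phinv
  for sc :: "'k::field \<Rightarrow> 'h::ring_1 \<Rightarrow> 'h" and Dl eps Phi Phinv +
  fixes sA :: "'k \<Rightarrow> 'a::ab_group_add \<Rightarrow> 'a" and act :: "'h \<Rightarrow> 'a \<Rightarrow> 'a"
    and mA :: "'a \<Rightarrow> 'a \<Rightarrow> 'a" and uA :: 'a
  assumes module_algebra: "module_algebra sc Dl eps Phi sA act mA uA"
begin

abbreviation AH :: "'a set" where
  "AH \<equiv> invariants sA eps act"

lemma sA_add: "sA c (x + y) = sA c x + sA c y"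
  and sA_add_scalar: "sA (c + d) x = sA c x + sA d x"
  and sA_mult_scalar: "sA (c * d) x = sA c (sA d x)"
  and sA_one: "sA 1 x = x"
  and act_add_left: "act (h + g) x = act h x + act g x"
  and act_add: "act h (x + y) = act h x + act h y"
  and act_sc: "act (sc c h) x = sA c (act h x)"
  and act_sA: "act h (sA c x) = sA c (act h x)"
  and act_mult: "act (h * g) x = act h (act g x)"
  and act_one [simp]: "act 1 x = x"
  using module_algebra unfolding module_algebra_def hmodule_def kvs_def by auto

lemma mA_add_left: "mA (a + a') b = mA a b + mA a' b"
  and mA_add_right: "mA a (b + b') = mA a b + mA a b'"
  and mA_sA_left: "mA (sA c a) b = sA c (mA a b)"
  and mA_sA_right: "mA a (sA c b) = sA c (mA a b)"
  and mA_unit_left [simp]: "mA uA a = a"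
  and mA_unit_right [simp]: "mA a uA = a"
  and mA_assoc: "mA (mA a b) d = (\<Sum>w\<leftarrow>Phi. mA (act (w ! 0) a) (mA (act (w ! 1) b) (act (w ! 2) d)))"
  and act_mA: "act h (mA a b) = (\<Sum>w\<leftarrow>Dl h. mA (act (w ! 0) a) (act (w ! 1) b))"
  and act_unit: "act h uA = sA (eps h) uA"
  using module_algebra unfolding module_algebra_def by auto

lemma act_zero_left [simp]: "act 0 x = 0"
  using act_add_left[of 0 0 x] by simp

lemma mA_zero_left [simp]: "mA 0 b = 0"
  using mA_add_left[of 0 0 b] by simp

lemma act_sum_list_left: "act (sum_list (map f xs)) x = (\<Sum>y\<leftarrow>xs. act (f y) x)"
  by (induction xs) (auto simp: act_add_left)

lemma mA_sum_list_left: "mA (sum_list (map f xs)) b = (\<Sum>y\<leftarrow>xs. mA (f y) b)"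
  by (induction xs) (auto simp: mA_add_left)

lemma invariantD: "b \<in> AH \<Longrightarrow> act h b = sA (eps h) b"
  by (simp add: invariants_def)

lemma act_mA_invariant:
  assumes b: "b \<in> AH" shows "act h (mA a b) = mA (act h a) b"
proof -
  have "act h (mA a b) = (\<Sum>w\<leftarrow>Dl h. mA (act (sc (eps (w ! 1)) (w ! 0)) a) b)"
    unfolding act_mA by (rule sum_list_map_cong) (simp add: invariantD[OF b] mA_sA_right mA_sA_left act_sc)
  also have "\<dots> = mA (act (\<Sum>w\<leftarrow>Dl h. sc (eps (w ! 1)) (w ! 0)) a) b"
    by (simp add: act_sum_list_left mA_sum_list_left)
  finally show ?thesis by (simp only: counit_left)
qed

text \<open>Quasi-associativity with an invariant third factor reduces to \<open>(id \<otimes> id \<otimes> \<epsilon>)(\<Phi>) = 1 \<otimes> 1\<close>.\<close>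

lemma mA_assoc_invariant:
  assumes b: "b \<in> AH" shows "mA (mA c a) b = mA c (mA a b)"
proof -
  define T where "T u = mA (act (u!0) c) (mA (act (u!1) a) b)" for u
  have T: "multilinear sc 2 T"
    by (rule multilinear2I) (simp_all add: T_def act_add_left mA_add_left mA_add_right act_sc mA_sA_left mA_sA_right)
  have "mA (mA c a) b = (\<Sum>w\<leftarrow>Phi. T [sc (eps (w!2)) (w!0), w!1])"
    unfolding mA_assoc by (rule sum_list_map_cong) (simp add: T_def invariantD[OF b] mA_sA_right mA_sA_left act_sc)
  also have "\<dots> = T [1, 1]" by (rule sum_Phi_counit_right[OF T])
  finally show ?thesis by (simp add: T_def)
qed

end

locale hopf_mod = module_alg sc Dl eps Phi Phinv sA act mA uA
  for sc :: "'k::field \<Rightarrow> 'h::ring_1 \<Rightarrow> 'h" and Dl eps Phi Phinv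
    and sA :: "'k \<Rightarrow> 'a::ab_group_add \<Rightarrow> 'a" and act mA uA +
  fixes sN :: "'k \<Rightarrow> 'n::ab_group_add \<Rightarrow> 'n" and hN :: "'h \<Rightarrow> 'n \<Rightarrow> 'n" and aN :: "'a \<Rightarrow> 'n \<Rightarrow> 'n"
  assumes hopf_module: "hopf_module sc Dl Phi sA act mA uA UNIV (+) 0 sN hN aN"
begin

abbreviation NH :: "'n set" where
  "NH \<equiv> invariants sN eps hN"

lemma sN_add: "sN c (x + y) = sN c x + sN c y"
  and sN_add_scalar: "sN (c + d) x = sN c x + sN d x"
  and sN_mult_scalar: "sN (c * d) x = sN c (sN d x)"
  and hN_add: "hN h (x + y) = hN h x + hN h y"
  using hopf_module unfolding hopf_module_def hmodule_def kvs_def by auto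

lemma aN_add_left: "aN (a + a') x = aN a x + aN a' x"
  and aN_add_right: "aN a (x + y) = aN a x + aN a y"
  and aN_sA_left: "aN (sA c a) x = sN c (aN a x)"
  and aN_sN_right: "aN a (sN c x) = sN c (aN a x)"
  and aN_unit [simp]: "aN uA x = x"
  and aN_mA: "aN (mA a b) x = (\<Sum>w\<leftarrow>Phi. aN (act (w ! 0) a) (aN (act (w ! 1) b) (hN (w ! 2) x)))"
  and hN_aN: "hN h (aN a x) = (\<Sum>w\<leftarrow>Dl h. aN (act (w ! 0) a) (hN (w ! 1) x))"
  using hopf_module unfolding hopf_module_def by (auto simp: gsum_plus_zero)

lemma sN_zero [simp]: "sN c 0 = 0"
  using sN_add[of c 0 0] by simp

lemma sN_uminus: "sN c (- x) = - sN c x"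
  using minus_unique[of "sN c x" "sN c (- x)"] sN_add[of c x "- x"] by simp

lemma hN_zero [simp]: "hN h 0 = 0"
  using hN_add[of h 0 0] by simp

lemma hN_uminus: "hN h (- x) = - hN h x"
  using minus_unique[of "hN h x" "hN h (- x)"] hN_add[of h x "- x"] by simp

lemma sN_zero_scalar [simp]: "sN 0 x = 0"
  using sN_add_scalar[of 0 0 x] by simp

lemma aN_zero_left [simp]: "aN 0 x = 0"
  using aN_add_left[of 0 0 x] by simp

lemma aN_zero_right [simp]: "aN a 0 = 0"
  using aN_add_right[of a 0 0] by simp

lemma sN_commute: "sN c (sN d x) = sN d (sN c x)"
  by (metis sN_mult_scalar mult.commute)

lemma sN_sum_list_scalar: "sN (sum_list (map f xs)) x = (\<Sum>y\<leftarrow>xs. sN (f y) x)"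
  by (induction xs) (auto simp: sN_add_scalar)

lemma aN_sum_list_left: "aN (sum_list (map f xs)) x = (\<Sum>y\<leftarrow>xs. aN (f y) x)"
  by (induction xs) (auto simp: aN_add_left)

lemma invariantD_module: "y \<in> NH \<Longrightarrow> hN h y = sN (eps h) y"
  by (simp add: invariants_def)

lemma aN_mA_invariant:
  assumes y: "y \<in> NH" shows "aN (mA a b) y = aN a (aN b y)"
proof -
  define T where "T u = aN (act (u!0) a) (aN (act (u!1) b) y)" for u
  have T: "multilinear sc 2 T"
    by (rule multilinear2I) (simp_all add: T_def act_add_left aN_add_left aN_add_right act_sc aN_sA_left aN_sN_right)
  have "aN (mA a b) y = (\<Sum>w\<leftarrow>Phi. T [sc (eps (w!2)) (w!0), w!1])"
    unfolding aN_mA by (rule sum_list_map_cong) (simp add: T_def invariantD_module[OF y] aN_sN_right aN_sA_left act_sc)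
  also have "\<dots> = T [1, 1]" by (rule sum_Phi_counit_right[OF T])
  finally show ?thesis by (simp add: T_def)
qed

lemma hN_aN_invariant:
  assumes y: "y \<in> NH" shows "hN h (aN a y) = aN (act h a) y"
proof -
  have "hN h (aN a y) = (\<Sum>w\<leftarrow>Dl h. aN (act (sc (eps (w ! 1)) (w ! 0)) a) y)"
    unfolding hN_aN by (rule sum_list_map_cong) (simp add: invariantD_module[OF y] aN_sN_right act_sc aN_sA_left)
  also have "\<dots> = aN (act (\<Sum>w\<leftarrow>Dl h. sc (eps (w ! 1)) (w ! 0)) a) y"
    by (simp add: act_sum_list_left aN_sum_list_left)
  finally show ?thesis by (simp only: counit_left)
qed

lemma aN_invariant_mem:
  assumes b: "b \<in> AH" and y: "y \<in> NH" shows "aN b y \<in> NH"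
proof -
  have "hN h (aN b y) = sN (eps h) (aN b y)" for h
  proof -
    have "hN h (aN b y) = (\<Sum>w\<leftarrow>Dl h. sN (eps (w!0) * eps (w!1)) (aN b y))"
      unfolding hN_aN
      by (rule sum_list_map_cong)
         (simp add: invariantD_module[OF y] invariantD[OF b] aN_sN_right aN_sA_left sN_mult_scalar sN_commute)
    also have "\<dots> = sN (eps h) (aN b y)"
      by (simp add: sN_sum_list_scalar eps_Delta[of h])
    finally show ?thesis .
  qed
  then show ?thesis by (simp add: invariants_def)
qed

lemma bmodule_invariants: "bmodule AH mA uA NH (+) 0 aN"
proof -
  have "x + y \<in> NH" "- x \<in> NH" if "x \<in> NH" "y \<in> NH" for x y
    using that by (simp_all add: invariants_def hN_add sN_add hN_uminus sN_uminus)
  moreover have "0 \<in> NH"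
    by (simp add: invariants_def)
  ultimately show ?thesis
    unfolding bmodule_def abgrp_def
    using aN_invariant_mem
    by (auto simp: aN_add_left aN_add_right aN_mA_invariant add.assoc add.commute intro!: bexI[of _ "- _"])
qed

end

lemma teq_btens_add_left: "teq (btens_rel B mA bM) [(a + a', m)] [(a, m), (a', m)]"
proof -
  have "(\<lambda>y. fsum [(a + a', m)] y - fsum [(a, m), (a', m)] y)
      = (\<lambda>y. delta (a + a', m) y - delta (a, m) y - delta (a', m) y)"
    by (auto simp: fun_eq_iff fsum_def delta_def)
  then show ?thesis unfolding teq_def by (simp only:) (rule sg_gen, unfold btens_rel_def, blast)
qed

lemma teq_btens_add_right: "teq (btens_rel B mA bM) [(a, m + m')] [(a, m), (a, m')]"
proof -
  have "(\<lambda>y. fsum [(a, m + m')] y - fsum [(a, m), (a, m')] y)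
      = (\<lambda>y. delta (a, m + m') y - delta (a, m) y - delta (a, m') y)"
    by (auto simp: fun_eq_iff fsum_def delta_def)
  then show ?thesis unfolding teq_def by (simp only:) (rule sg_gen, unfold btens_rel_def, blast)
qed

lemma teq_btens_balanced: "b \<in> B \<Longrightarrow> teq (btens_rel B mA bM) [(mA a b, m)] [(a, bM b m)]"
proof -
  assume "b \<in> B"
  moreover have "(\<lambda>y. fsum [(mA a b, m)] y - fsum [(a, bM b m)] y)
      = (\<lambda>y. delta (mA a b, m) y - delta (a, bM b m) y)"
    by (auto simp: fun_eq_iff fsum_def delta_def)
  ultimately show ?thesis unfolding teq_def by (simp only:) (rule sg_gen, unfold btens_rel_def, blast)
qed

lemma btens_rel_cases:
  assumes "g \<in> btens_rel B mA bM"
  obtains (add_left) a a' m where "g = (\<lambda>y. fsum [(a + a', m)] y - fsum [(a, m), (a', m)] y)"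
    | (add_right) a m m' where "g = (\<lambda>y. fsum [(a, m + m')] y - fsum [(a, m), (a, m')] y)"
    | (balanced) a b m where "b \<in> B" "g = (\<lambda>y. fsum [(mA a b, m)] y - fsum [(a, bM b m)] y)"
proof -
  have fsum2: "fsum [x, x'] y = delta x y + delta x' y" "fsum [x] y = delta x y" for x x' y
    by (simp_all add: fsum_def delta_def)
  from assms show thesis
    unfolding btens_rel_def
    by (elim UnE CollectE exE conjE) (simp_all only: fsum2 diff_diff_eq that)
qed

lemma teq_btens_map:
  assumes f_add: "\<And>x y. f (x + y) = f x + f y" and f_B: "\<And>a b. b \<in> B \<Longrightarrow> f (mA a b) = mA (f a) b"
    and u_add: "\<And>x y. u (x + y) = u x + u y" and u_B: "\<And>b m. b \<in> B \<Longrightarrow> u (bM' b m) = bM b (u m)"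
    and "teq (btens_rel B mA bM') xs ys"
  shows "teq (btens_rel B mA bM) (map (map_prod f u) xs) (map (map_prod f u) ys)"
proof (rule teq_map[OF assms(5)])
  fix g assume "g \<in> btens_rel B mA bM'"
  then show "\<exists>P N. g = (\<lambda>y. fsum P y - fsum N y) \<and>
      teq (btens_rel B mA bM) (map (map_prod f u) P) (map (map_prod f u) N)"
  proof (cases rule: btens_rel_cases)
    case add_left
    then show ?thesis by (intro exI conjI) (assumption, simp add: f_add teq_btens_add_left)
  next
    case add_right
    then show ?thesis by (intro exI conjI) (assumption, simp add: u_add teq_btens_add_right)
  next
    case balanced
    then show ?thesis by (intro exI conjI) (assumption, simp add: f_B u_B teq_btens_balanced)
  qed
qed

lemma teq_btens_zero_left:
  fixes B :: "'a::ab_group_add set"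
  shows "teq (btens_rel B mA bM) [(0, m)] []"
proof -
  have "teq (btens_rel B mA bM) [(0, m)] [(0, m), (0, m)]"
    using teq_btens_add_left[of B mA bM 0 0 m] by simp
  then have "teq (btens_rel B mA bM) ([(0, m)] @ [(0, m)]) ([] @ [(0, m)])"
    by (simp add: teq_sym)
  then show ?thesis by (rule teq_cancel) simp
qed

lemma teq_btens_sum_list_left:
  fixes B :: "'a::ab_group_add set"
  shows "teq (btens_rel B mA bM) [(sum_list (map f as), m)] (map (\<lambda>a. (f a, m)) as)"
proof (induction as)
  case Nil
  then show ?case by (simp add: teq_btens_zero_left)
next
  case (Cons a as)
  have "teq (btens_rel B mA bM) [(f a + sum_list (map f as), m)] ([(f a, m)] @ [(sum_list (map f as), m)])"
    using teq_btens_add_left by simp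
  also have "teq (btens_rel B mA bM) \<dots> ([(f a, m)] @ map (\<lambda>a. (f a, m)) as)"
    by (rule teq_append[OF teq_refl Cons])
  finally show ?case by simp
qed

lemma case_prod_apfst: "(\<lambda>(a, m). (f a, m)) = apfst f"
  by (simp add: fun_eq_iff)

lemma mset_concat_map_Cons:
  "mset (concat (map (\<lambda>w. h w # r w) L)) = mset (map h L) + mset (concat (map r L))"
  by (induction L) auto

locale tensor_prod = module_alg sc Dl eps Phi Phinv sA act mA uA
  for sc :: "'k::field \<Rightarrow> 'h::ring_1 \<Rightarrow> 'h" and Dl eps Phi Phinv
    and sA :: "'k \<Rightarrow> 'a::ab_group_add \<Rightarrow> 'a" and act mA uA +
  fixes bM :: "'a \<Rightarrow> 'm::ab_group_add \<Rightarrow> 'm"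
begin

abbreviation G :: "('a \<times> 'm \<Rightarrow> int) set" where
  "G \<equiv> btens_rel AH mA bM"

lemma tcls_map_apfst_trep:
  assumes "\<And>x y. f (x + y) = f x + f y" "\<And>a b. b \<in> AH \<Longrightarrow> f (mA a b) = mA (f a) b"
  shows "tcls G (map (apfst f) (trep (tcls G xs))) = tcls G (map (apfst f) xs)"
  using teq_btens_map[of f AH mA id bM bM] assms by (intro tcls_lift) (simp add: apfst_def)

lemma tscal_tcls [simp]: "tscal G sA c (tcls G xs) = tcls G (map (apfst (sA c)) xs)"
  unfolding tscal_def case_prod_apfst by (rule tcls_map_apfst_trep) (simp_all add: sA_add mA_sA_left)

lemma thact_tcls [simp]: "thact G act h (tcls G xs) = tcls G (map (apfst (act h)) xs)"
  unfolding thact_def case_prod_apfst by (rule tcls_map_apfst_trep) (simp_all add: act_add act_mA_invariant)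

lemma taact_tcls [simp]: "taact G mA c (tcls G xs) = tcls G (map (apfst (mA c)) xs)"
  unfolding taact_def case_prod_apfst by (rule tcls_map_apfst_trep) (simp_all add: mA_add_right mA_assoc_invariant)

lemma tcls_map_apfst_sum_list:
  assumes "\<And>a. f a = (\<Sum>w\<leftarrow>L. g w a)"
  shows "tcls G (map (apfst f) xs) = tcls G (concat (map (\<lambda>w. map (apfst (g w)) xs) L))"
  unfolding tcls_eq_iff
proof (induction xs)
  case Nil
  show ?case by (induction L) simp_all
next
  case (Cons x xs)
  obtain a m where x: "x = (a, m)" by (cases x)
  have "teq G ([(f a, m)] @ map (apfst f) xs)
      (map (\<lambda>w. (g w a, m)) L @ concat (map (\<lambda>w. map (apfst (g w)) xs) L))"
    by (rule teq_append[OF _ Cons]) (simp add: assms teq_btens_sum_list_left)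
  also have "teq G \<dots> (concat (map (\<lambda>w. map (apfst (g w)) (x # xs)) L))"
    by (rule teq_mset_eq) (simp add: x mset_concat_map_Cons)
  finally show ?case by (simp add: x)
qed

lemma tcls_map_apfst_add:
  assumes "\<And>a. f a = g a + k a"
  shows "tcls G (map (apfst f) xs) = tcls G (map (apfst g) xs @ map (apfst k) xs)"
  using tcls_map_apfst_sum_list[where L = "[g, k]" and g = "\<lambda>w. w"] assms by simp

lemma tcls_append_map_apfst_uminus: "tcls G (xs @ map (apfst uminus) xs) = tcls G []"
  using tcls_map_apfst_sum_list[where f = "\<lambda>_. 0" and L = "[id, uminus]" and g = "\<lambda>w. w" and xs = xs]
    tcls_map_apfst_sum_list[where f = "\<lambda>_. 0" and L = "[]" and g = "\<lambda>w. w" and xs = xs]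
  by simp

text \<open>The axioms that are linear in the first tensor factor hold term by term on representatives; the
  remaining ones use the relation \<open>(a + a') \<otimes> m = a \<otimes> m + a' \<otimes> m\<close>.\<close>

lemma hopf_module_tensor:
  "hopf_module sc Dl Phi sA act mA uA (tcarrier G) (tplus G) (tzero G) (tscal G sA) (thact G act) (taact G mA)"
  unfolding hopf_module_def hmodule_def kvs_def abgrp_def ball_tcarrier
  apply (intro conjI allI)
  apply (simp_all add: tzero_def o_def apfst_compose sA_mult_scalar[abs_def] sA_one[abs_def]
    act_mult[abs_def] act_sc[abs_def] act_sA[abs_def] mA_sA_left[abs_def] mA_sA_right[abs_def] mA_unit_left[abs_def]
    act_one[abs_def] apfst_id[unfolded id_def] gsum_tplus_tcls)
  subgoal by (rule tcls_append_commute)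
  subgoal for xs
    by (rule bexI[of _ "tcls G (map (apfst uminus) xs)"]) (simp_all add: tcls_append_map_apfst_uminus)
  subgoal by (rule tcls_map_apfst_add) (simp add: sA_add_scalar)
  subgoal by (rule tcls_map_apfst_add) (simp add: act_add_left)
  subgoal by (rule tcls_map_apfst_add) (simp add: mA_add_left)
  subgoal by (rule tcls_map_apfst_sum_list) (simp add: mA_assoc)
  subgoal by (rule tcls_map_apfst_sum_list) (simp add: act_mA)
  done

end

locale adjunction =
  tensor_prod sc Dl eps Phi Phinv sA act mA uA bM + hopf_mod sc Dl eps Phi Phinv sA act mA uA sN hN aN
  for sc :: "'k::field \<Rightarrow> 'h::ring_1 \<Rightarrow> 'h" and Dl eps Phi Phinv
    and sA :: "'k \<Rightarrow> 'a::ab_group_add \<Rightarrow> 'a" and act mA uA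
    and bM :: "'a \<Rightarrow> 'm::ab_group_add \<Rightarrow> 'm"
    and sN :: "'k \<Rightarrow> 'n::ab_group_add \<Rightarrow> 'n" and hN aN
begin

abbreviation BH :: "('m \<Rightarrow> 'n) set" where
  "BH \<equiv> bmod_homs AH UNIV (+) bM NH (+) aN"

abbreviation HH :: "(('a \<times> 'm) list set \<Rightarrow> 'n) set" where
  "HH \<equiv> hopf_homs (tcarrier G) (tplus G) (tscal G sA) (thact G act) (taact G mA) UNIV (+) sN hN aN"

definition extend_sum :: "('m \<Rightarrow> 'n) \<Rightarrow> ('a \<times> 'm) list \<Rightarrow> 'n" where
  "extend_sum g xs = (\<Sum>(a, m)\<leftarrow>xs. aN a (g m))"

lemma extend_sum_append [simp]: "extend_sum g (xs @ ys) = extend_sum g xs + extend_sum g ys"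
  by (simp add: extend_sum_def)

lemma bmod_homD:
  assumes "g \<in> BH"
  shows "g x \<in> NH" "g (x + y) = g x + g y" "b \<in> AH \<Longrightarrow> g (bM b x) = aN b (g x)"
  using assms by (auto simp: bmod_homs_def)

lemma teq_extend_sum:
  assumes g: "g \<in> BH" and "teq G xs ys"
  shows "extend_sum g xs = extend_sum g ys"
  unfolding extend_sum_def
proof (rule teq_sum_list_map[OF assms(2)])
  fix r assume "r \<in> G"
  then show "\<exists>P N. r = (\<lambda>y. fsum P y - fsum N y) \<and>
      (\<Sum>(a, m)\<leftarrow>P. aN a (g m)) = (\<Sum>(a, m)\<leftarrow>N. aN a (g m))"
  proof (cases rule: btens_rel_cases)
    case add_left
    then show ?thesis by (intro exI conjI) (assumption, simp add: aN_add_left)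
  next
    case add_right
    then show ?thesis by (intro exI conjI) (assumption, simp add: aN_add_right bmod_homD(2)[OF g])
  next
    case balanced
    then show ?thesis by (intro exI conjI) (assumption, simp add: aN_mA_invariant bmod_homD[OF g])
  qed
qed

lemma adj_inv_map_tcls: "g \<in> BH \<Longrightarrow> adj_inv_map G aN g (tcls G xs) = extend_sum g xs"
  unfolding adj_inv_map_def extend_sum_def[symmetric]
  using teq_extend_sum[OF _ teq_sym[OF teq_trep_tcls]] by simp

lemma extend_sum_sA: "extend_sum g (map (apfst (sA c)) xs) = sN c (extend_sum g xs)"
  by (induction xs) (auto simp: extend_sum_def aN_sA_left sN_add)

lemma extend_sum_act: "g \<in> BH \<Longrightarrow> extend_sum g (map (apfst (act h)) xs) = hN h (extend_sum g xs)"
  by (induction xs) (auto simp: extend_sum_def hN_add hN_aN_invariant bmod_homD)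

lemma extend_sum_mA: "g \<in> BH \<Longrightarrow> extend_sum g (map (apfst (mA c)) xs) = aN c (extend_sum g xs)"
  by (induction xs) (auto simp: extend_sum_def aN_add_right aN_mA_invariant bmod_homD)

lemma adj_inv_map_hopf_hom: "g \<in> BH \<Longrightarrow> adj_inv_map G aN g \<in> HH"
  unfolding hopf_homs_def ball_tcarrier
  by (auto simp: adj_inv_map_tcls extend_sum_sA extend_sum_act extend_sum_mA) (simp add: adj_inv_map_def)

lemma adj_unit_inv: "g \<in> BH \<Longrightarrow> adj_unit_map G uA (adj_inv_map G aN g) = g"
  by (rule ext) (simp add: adj_unit_map_def adj_inv_map_tcls extend_sum_def)

lemma hopf_homD:
  assumes "f \<in> HH"
  shows "f (tcls G (xs @ ys)) = f (tcls G xs) + f (tcls G ys)"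
    and "f (tcls G (map (apfst (sA c)) xs)) = sN c (f (tcls G xs))"
    and "f (tcls G (map (apfst (act h)) xs)) = hN h (f (tcls G xs))"
    and "f (tcls G (map (apfst (mA a)) xs)) = aN a (f (tcls G xs))"
    and "X \<notin> tcarrier G \<Longrightarrow> f X = undefined"
  using assms unfolding hopf_homs_def ball_tcarrier
  by (auto simp del: tplus_tcls simp add: tplus_tcls[symmetric])

lemma adj_unit_map_bmod_hom:
  assumes f: "f \<in> HH" shows "adj_unit_map G uA f \<in> BH"
  unfolding bmod_homs_def adj_unit_map_def
proof (intro CollectI conjI ballI allI impI)
  fix m :: 'm
  have "hN h (f (tcls G [(uA, m)])) = sN (eps h) (f (tcls G [(uA, m)]))" for h
    using hopf_homD(2,3)[OF f, of _ "[(uA, m)]"] by (simp add: act_unit)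
  then show "f (tcls G [(uA, m)]) \<in> NH" by (simp add: invariants_def)
next
  fix x y :: 'm
  have "tcls G [(uA, x + y)] = tcls G ([(uA, x)] @ [(uA, y)])"
    unfolding tcls_eq_iff by (simp add: teq_btens_add_right)
  then show "f (tcls G [(uA, x + y)]) = f (tcls G [(uA, x)]) + f (tcls G [(uA, y)])"
    by (simp only: hopf_homD(1)[OF f])
next
  fix b x assume "b \<in> AH"
  then have "tcls G [(uA, bM b x)] = tcls G (map (apfst (mA b)) [(uA, x)])"
    unfolding tcls_eq_iff using teq_sym[OF teq_btens_balanced[where a = uA and m = x and bM = bM and mA = mA]] by simp
  then show "f (tcls G [(uA, bM b x)]) = aN b (f (tcls G [(uA, x)]))"
    by (simp only: hopf_homD(4)[OF f])
qed simp

lemma hopf_hom_tcls: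
  assumes f: "f \<in> HH"
  shows "f (tcls G xs) = extend_sum (adj_unit_map G uA f) xs"
proof (induction xs)
  case Nil
  have "f (tcls G []) = f (tcls G []) + f (tcls G [])"
    using hopf_homD(1)[OF f, of "[]" "[]"] by simp
  then show ?case by (simp add: extend_sum_def)
next
  case (Cons x xs)
  obtain a m where x: "x = (a, m)" by (cases x)
  have "f (tcls G (x # xs)) = f (tcls G [(a, m)]) + f (tcls G xs)"
    using hopf_homD(1)[OF f, of "[(a, m)]" xs] by (simp add: x)
  moreover have "f (tcls G [(a, m)]) = aN a (f (tcls G [(uA, m)]))"
    using hopf_homD(4)[OF f, of a "[(uA, m)]"] by simp
  ultimately show ?case using Cons by (simp add: x extend_sum_def adj_unit_map_def)
qed

lemma adj_inv_unit: "f \<in> HH \<Longrightarrow> adj_inv_map G aN (adj_unit_map G uA f) = f"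
  by (rule ext)
     (auto simp: adj_inv_map_def extend_sum_def[symmetric] hopf_homD(5) hopf_hom_tcls[symmetric]
        tcls_trep_tcarrier)

lemma bij_betw_adj_unit_map: "bij_betw (adj_unit_map G uA) HH BH"
  by (rule bij_betw_byWitness[where f' = "adj_inv_map G aN"])
     (auto simp: adj_inv_unit adj_unit_inv adj_unit_map_bmod_hom adj_inv_map_hopf_hom)

lemma adj_unit_map_natural_tensor:
  fixes bM' :: "'a \<Rightarrow> 'm2::ab_group_add \<Rightarrow> 'm2"
  assumes u: "u \<in> bmod_homs AH UNIV (+) bM' UNIV (+) bM"
  defines "G' \<equiv> btens_rel AH mA bM'"
  shows "tmap G G' u \<in> hopf_homs (tcarrier G') (tplus G') (tscal G' sA) (thact G' act) (taact G' mA)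
            (tcarrier G) (tplus G) (tscal G sA) (thact G act) (taact G mA)"
    and "adj_unit_map G' uA (restrict (f \<circ> tmap G G' u) (tcarrier G')) = adj_unit_map G uA f \<circ> u"
proof -
  interpret M': tensor_prod sc Dl eps Phi Phinv sA act mA uA bM' ..
  have "teq G (map (map_prod id u) xs) (map (map_prod id u) ys)" if "teq G' xs ys" for xs ys
    using u that unfolding G'_def by (intro teq_btens_map) (auto simp: bmod_homs_def)
  then have tmap_tcls: "tmap G G' u (tcls G' xs) = tcls G (map (map_prod id u) xs)" for xs
    unfolding tmap_def using tcls_lift[of G' G] by (simp add: map_prod_def)
  have map_prod_apfst: "map_prod id u \<circ> apfst f = apfst f \<circ> map_prod id u" for f :: "'a \<Rightarrow> 'a"
    by (simp add: fun_eq_iff)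
  have "tmap G G' u X = undefined" if "X \<notin> tcarrier G'" for X
    using that by (simp add: tmap_def)
  then show "tmap G G' u \<in> hopf_homs (tcarrier G') (tplus G') (tscal G' sA) (thact G' act) (taact G' mA)
            (tcarrier G) (tplus G) (tscal G sA) (thact G act) (taact G mA)"
    unfolding hopf_homs_def ball_tcarrier G'_def by (simp add: tmap_tcls[unfolded G'_def] map_prod_apfst)
  show "adj_unit_map G' uA (restrict (f \<circ> tmap G G' u) (tcarrier G')) = adj_unit_map G uA f \<circ> u"
    by (rule ext) (simp add: adj_unit_map_def tmap_tcls)
qed

lemma adj_unit_map_natural_invariants:
  assumes v: "v \<in> hopf_homs UNIV (+) sN hN aN UNIV (+) sN' hN' aN'"
  shows "restrict v NH \<in> bmod_homs AH NH (+) aN (invariants sN' eps hN') (+) aN'"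
    and "adj_unit_map G uA (restrict (v \<circ> f) (tcarrier G)) = v \<circ> adj_unit_map G uA f"
proof -
  have v_add: "v (x + y) = v x + v y" and v_aN: "v (aN a x) = aN' a (v x)"
    and v_sN: "v (sN c x) = sN' c (v x)" and v_hN: "v (hN h x) = hN' h (v x)" for x y a c h
    using v by (auto simp: hopf_homs_def)
  have "v x \<in> invariants sN' eps hN'" if "x \<in> NH" for x
    using that by (simp add: invariants_def flip: v_hN v_sN)
  then show "restrict v NH \<in> bmod_homs AH NH (+) aN (invariants sN' eps hN') (+) aN'"
    using bmodule_invariants unfolding bmod_homs_def bmodule_def abgrp_def by (auto simp: v_add v_aN)
  show "adj_unit_map G uA (restrict (v \<circ> f) (tcarrier G)) = v \<circ> adj_unit_map G uA f"
    by (rule ext) (simp add: adj_unit_map_def)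
qed

end

theorem mainTheorem1:
  fixes sc :: "'k::field \<Rightarrow> 'h::ring_1 \<Rightarrow> 'h"
    and Dl :: "'h \<Rightarrow> 'h list list" and eps :: "'h \<Rightarrow> 'k"
    and Phi Phinv :: "'h list list"
    and sA :: "'k \<Rightarrow> 'a::ab_group_add \<Rightarrow> 'a" and act :: "'h \<Rightarrow> 'a \<Rightarrow> 'a"
    and mA :: "'a \<Rightarrow> 'a \<Rightarrow> 'a" and uA :: 'a
    and bM :: "'a \<Rightarrow> 'm::ab_group_add \<Rightarrow> 'm"
    and bM' :: "'a \<Rightarrow> 'm2::ab_group_add \<Rightarrow> 'm2"
    and sN :: "'k \<Rightarrow> 'n::ab_group_add \<Rightarrow> 'n" and hN :: "'h \<Rightarrow> 'n \<Rightarrow> 'n" and aN :: "'a \<Rightarrow> 'n \<Rightarrow> 'n"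
    and sN' :: "'k \<Rightarrow> 'n2::ab_group_add \<Rightarrow> 'n2" and hN' :: "'h \<Rightarrow> 'n2 \<Rightarrow> 'n2"
    and aN' :: "'a \<Rightarrow> 'n2 \<Rightarrow> 'n2"
    and B :: "'a set" and G :: "('a \<times> 'm \<Rightarrow> int) set" and G' :: "('a \<times> 'm2 \<Rightarrow> int) set"
    and NH :: "'n set" and NH' :: "'n2 set"
  defines "B \<equiv> invariants sA eps act"
    and "G \<equiv> btens_rel B mA bM"
    and "G' \<equiv> btens_rel B mA bM'"
    and "NH \<equiv> invariants sN eps hN"
    and "NH' \<equiv> invariants sN' eps hN'"
  assumes H: "quasi_bialgebra sc Dl eps Phi Phinv"
    and A: "module_algebra sc Dl eps Phi sA act mA uA"
    and M: "bmodule B mA uA UNIV (+) 0 bM"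
    and M': "bmodule B mA uA UNIV (+) 0 bM'"
    and N: "hopf_module sc Dl Phi sA act mA uA UNIV (+) 0 sN hN aN"
    and N': "hopf_module sc Dl Phi sA act mA uA UNIV (+) 0 sN' hN' aN'"
  shows
    "(hopf_module sc Dl Phi sA act mA uA (tcarrier G) (tplus G) (tzero G)
        (tscal G sA) (thact G act) (taact G mA))
   \<and> (bmodule B mA uA NH (+) 0 aN)
   \<and> (bij_betw (adj_unit_map G uA)
       (hopf_homs (tcarrier G) (tplus G) (tscal G sA) (thact G act) (taact G mA) UNIV (+) sN hN aN)
       (bmod_homs B UNIV (+) bM NH (+) aN))
   \<and> (\<forall>g \<in> bmod_homs B UNIV (+) bM NH (+) aN.
       adj_inv_map G aN g
         \<in> hopf_homs (tcarrier G) (tplus G) (tscal G sA) (thact G act) (taact G mA) UNIV (+) sN hN aN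
       \<and> adj_unit_map G uA (adj_inv_map G aN g) = g)
   \<and> (\<forall>f \<in> hopf_homs (tcarrier G) (tplus G) (tscal G sA) (thact G act) (taact G mA) UNIV (+) sN hN aN.
       adj_inv_map G aN (adj_unit_map G uA f) = f)
   \<and> (\<forall>u \<in> bmod_homs B UNIV (+) bM' UNIV (+) bM.
       tmap G G' u \<in> hopf_homs (tcarrier G') (tplus G') (tscal G' sA) (thact G' act) (taact G' mA)
                        (tcarrier G) (tplus G) (tscal G sA) (thact G act) (taact G mA)
     \<and> (\<forall>f \<in> hopf_homs (tcarrier G) (tplus G) (tscal G sA) (thact G act) (taact G mA) UNIV (+) sN hN aN.
          adj_unit_map G' uA (restrict (f \<circ> tmap G G' u) (tcarrier G')) = adj_unit_map G uA f \<circ> u))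
   \<and> (\<forall>v \<in> hopf_homs UNIV (+) sN hN aN UNIV (+) sN' hN' aN'.
       restrict v NH \<in> bmod_homs B NH (+) aN NH' (+) aN'
     \<and> (\<forall>f \<in> hopf_homs (tcarrier G) (tplus G) (tscal G sA) (thact G act) (taact G mA) UNIV (+) sN hN aN.
          adj_unit_map G uA (restrict (v \<circ> f) (tcarrier G)) = v \<circ> adj_unit_map G uA f))"
proof -
  interpret adjunction sc Dl eps Phi Phinv sA act mA uA bM sN hN aN
    using H A N by unfold_locales
  show ?thesis
    unfolding B_def G_def G'_def NH_def NH'_def
    using hopf_module_tensor bmodule_invariants bij_betw_adj_unit_map
      adj_inv_map_hopf_hom adj_unit_inv adj_inv_unit
      adj_unit_map_natural_tensor adj_unit_map_natural_invariants
    by blast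
qed

end
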